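(* Let $\rho>0$ and let $\bar\mu^\rho$ be the unique probability measure on $(\mathcal{P}_{\mathbb{Q}},\mathcal{F}_{\mathbb{Q}})$ putting weight on right-continuous partitions such that $\mathrm{Rest}_z\star\bar\mu^\rho=\mu^{\rho,z}$ for every finite $z\subset\mathbb{Q}^+$. There exists a unique measure $\mu^\rho$ on $(\mathcal{P}^{loc},\mathcal{F})$ such that $\mathrm{Rest}_{\mathbb{Q}}\star\mu^\rho=\bar\mu^\rho$.
   Context: $\mathcal{P}_{\mathbb{Q}}$ is the set of partitions of $\mathbb{Q}^+$ with the $\sigma$-field $\mathcal{F}_{\mathbb{Q}}$ generated by the restriction maps $\mathrm{Rest}_z$ to finite $z\subset\mathbb{Q}^+$; a partition of $\mathbb{Q}^+$ is right-continuous if whenever $\mathbb{Q}^+\ni x_n\downarrow x\in\mathbb{Q}^+$, $x_n$ lies in the same segment (maximal connected subset of a block) as $x$ for large $n$. $\mathcal{P}^{loc}$ is the set of right-continuous (segments are left-closed right-open intervals) and locally finite partitions of $\mathbb{R}^+$, with $\sigma$-field $\mathcal{F}$ generated by the restriction maps to finite subsets; $\mathrm{Rest}_{\mathbb{Q}}$ maps $\pi\in\mathcal{P}^{loc}$ to the partition of $\mathbb{Q}^+$ it induces. For finite $z=\{z_0<\dots<z_n\}$, $\mu^{\rho,z}$ is the unique invariant probability measure of the ARG $\Gamma^{\rho,z}$: the Markov chain on partitions of $z$ in which each pair of blocks merges at rate $1$, and each block $\{z_{i_1}<\dots<z_{i_k}\}$ splits into $\{z_{i_1},\dots,z_{i_j}\}$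 and $\{z_{i_{j+1}},\dots,z_{i_k}\}$ at rate $\rho(z_{i_{j+1}}-z_{i_j})$. $f\star\mu=\mu\circ f^{-1}$. *)

theory Defs
  imports "HOL-Probability.Probability"
begin

definition Parts :: "'a set \<Rightarrow> 'a set set set" where
  "Parts A = {P. partition_on A P}"

definition Rest :: "'a set \<Rightarrow> 'a set set \<Rightarrow> 'a set set" where
  "Rest z P = (\<lambda>B. B \<inter> z) ` P - {{}}"

definition convex_in :: "'a::linorder set \<Rightarrow> 'a set \<Rightarrow> bool" where
  "convex_in A S \<longleftrightarrow> S \<subseteq> A \<and> (\<forall>x\<in>S. \<forall>y\<in>S. \<forall>w\<in>A. x \<le> w \<and> w \<le> y \<longrightarrow> w \<in> S)"

definition segment :: "'a::linorder set \<Rightarrow> 'a set set \<Rightarrow> 'a set \<Rightarrow> bool" where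
  "segment A P S \<longleftrightarrow> S \<noteq> {} \<and> convex_in A S \<and> (\<exists>B\<in>P. S \<subseteq> B) \<and>
     (\<forall>T. convex_in A T \<and> (\<exists>B\<in>P. T \<subseteq> B) \<and> S \<subseteq> T \<longrightarrow> T = S)"

definition part_measure :: "'a set \<Rightarrow> 'a set set set \<Rightarrow> 'a set set measure" where
  "part_measure A X = sigma X
     {{P \<in> X. Rest z P \<in> E} | z E. finite z \<and> z \<subseteq> A \<and> E \<subseteq> Parts z}"

definition Qplus :: "rat set" where "Qplus = {q. 0 \<le> q}"
definition Rplus :: "real set" where "Rplus = {x. 0 \<le> x}"

definition right_cont_Q :: "rat set set \<Rightarrow> bool" where
  "right_cont_Q P \<longleftrightarrow> (\<forall>x\<in>Qplus. \<forall>X::nat \<Rightarrow> rat. (\<forall>n. X n \<in> Qplus) \<and> decseq X \<and>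
      (\<lambda>n. real_of_rat (X n)) \<longlonglongrightarrow> real_of_rat x \<longrightarrow>
      (\<forall>\<^sub>F n in sequentially. \<exists>S. segment Qplus P S \<and> x \<in> S \<and> X n \<in> S))"

definition P_Q :: "rat set set measure" where
  "P_Q = part_measure Qplus (Parts Qplus)"

definition right_cont_R :: "real set set \<Rightarrow> bool" where
  "right_cont_R P \<longleftrightarrow> (\<forall>S. segment Rplus P S \<longrightarrow>
      (\<exists>a b. a < b \<and> S = {a..<b}) \<or> (\<exists>a. S = {a..}))"

definition loc_finite_R :: "real set set \<Rightarrow> bool" where
  "loc_finite_R P \<longleftrightarrow> (\<forall>t. finite {S. segment Rplus P S \<and> S \<inter> {0..t} \<noteq> {}})"

definition Ploc_set :: "real set set set" where
  "Ploc_set = {P \<in> Parts Rplus. right_cont_R P \<and> loc_finite_R P}"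

definition P_loc :: "real set set measure" where
  "P_loc = part_measure Rplus Ploc_set"

definition Rest_Q :: "real set set \<Rightarrow> rat set set" where
  "Rest_Q P = (\<lambda>B. real_of_rat -` B \<inter> Qplus) ` P - {{}}"

definition merge_step :: "'a set set \<Rightarrow> 'a set set \<Rightarrow> bool" where
  "merge_step x y \<longleftrightarrow> (\<exists>B\<in>x. \<exists>C\<in>x. B \<noteq> C \<and> y = insert (B \<union> C) (x - {B, C}))"

definition split_at :: "'a::linorder set set \<Rightarrow> 'a set \<Rightarrow> 'a \<Rightarrow> 'a \<Rightarrow> 'a set set" where
  "split_at x B a b = insert {c\<in>B. c \<le> a} (insert {c\<in>B. b \<le> c} (x - {B}))"

definition split_triples :: "'a::linorder set set \<Rightarrow> 'a set set \<Rightarrow> ('a set \<times> 'a \<times> 'a) set" where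
  "split_triples x y = {(B, a, b). B \<in> x \<and> a \<in> B \<and> b \<in> B \<and> a < b \<and>
       \<not> (\<exists>c\<in>B. a < c \<and> c < b) \<and> y = split_at x B a b}"

definition arg_rate :: "real \<Rightarrow> rat set set \<Rightarrow> rat set set \<Rightarrow> real" where
  "arg_rate \<rho> x y = (if merge_step x y then 1 else 0) +
      (\<Sum>(B, a, b)\<in>split_triples x y. \<rho> * real_of_rat (b - a))"

definition arg_invariant :: "real \<Rightarrow> rat set \<Rightarrow> rat set set measure \<Rightarrow> bool" where
  "arg_invariant \<rho> z M \<longleftrightarrow> prob_space M \<and> space M = Parts z \<and> sets M = Pow (Parts z) \<and>
     (\<forall>y\<in>Parts z. (\<Sum>x\<in>Parts z - {y}. measure M {x} * arg_rate \<rho> x y) =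
                   measure M {y} * (\<Sum>x\<in>Parts z - {y}. arg_rate \<rho> y x))"

definition mu_rz :: "real \<Rightarrow> rat set \<Rightarrow> rat set set measure" where
  "mu_rz \<rho> z = (THE M. arg_invariant \<rho> z M)"

end

theory Submission
  imports Defs
begin

text \<open>The two-point marginals give, for rationals \<open>a < b\<close>, probability at most \<open>\<rho> (b - a)\<close> that
  \<open>a\<close> and \<open>b\<close> lie in different blocks. Summing over consecutive points of a finite set of rationals
  in \<open>[0, n]\<close>, the expected number of block changes along it is at most \<open>\<rho> n\<close>; by monotone
  convergence, almost surely these numbers are bounded for every \<open>n\<close>. For such a partition that is
  right-continuous on the rationals, every real \<open>x \<ge> 0\<close> has a right germ, i.e. a block containing
  all rationals in some \<open>[x, x + \<epsilon>)\<close>: otherwise arbitrarily many disjoint separated pairs of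
  rationals accumulate at \<open>x\<close>. Grouping the reals by their right germs yields a right-continuous
  partition of the half-line whose restriction to the rationals is the original one; it is locally
  finite because every left endpoint of a segment is again straddled by a separated pair. This
  lift is measurable, and pushing the measure forward along it gives \<open>\<mu>\<close>. Uniqueness holds because
  in a right-continuous partition, whether two reals share a block is determined by the blocks of
  the rationals immediately to their right, so the \<open>\<sigma>\<close>-field of \<open>P_loc\<close> is induced by
  \<open>Rest_Q\<close>.\<close>

section \<open>Partitions and their restrictions\<close>

definition same_block :: "'a set set \<Rightarrow> 'a \<Rightarrow> 'a \<Rightarrow> bool" where
  "same_block P a b \<longleftrightarrow> (\<exists>B\<in>P. a \<in> B \<and> b \<in> B)"

lemma mem_Parts_iff: "P \<in> Parts A \<longleftrightarrow> partition_on A P"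
  by (simp add: Parts_def)

lemma partition_on_block_eq:
  "partition_on A P \<Longrightarrow> B \<in> P \<Longrightarrow> C \<in> P \<Longrightarrow> a \<in> B \<Longrightarrow> a \<in> C \<Longrightarrow> B = C"
  unfolding partition_on_def disjoint_def by blast

lemma same_block_sym: "same_block P a b \<Longrightarrow> same_block P b a"
  unfolding same_block_def by blast

lemma same_block_refl: "partition_on A P \<Longrightarrow> a \<in> A \<Longrightarrow> same_block P a a"
  unfolding same_block_def partition_on_def by blast

lemma same_block_trans:
  "partition_on A P \<Longrightarrow> same_block P a b \<Longrightarrow> same_block P b c \<Longrightarrow> same_block P a c"
  unfolding same_block_def using partition_on_block_eq by metis

lemma same_block_imp_mem: "partition_on A P \<Longrightarrow> same_block P a b \<Longrightarrow> a \<in> A \<and> b \<in> A"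
  unfolding same_block_def partition_on_def by blast

lemma same_block_iff_mem:
  "partition_on A P \<Longrightarrow> B \<in> P \<Longrightarrow> a \<in> B \<Longrightarrow> same_block P a b \<longleftrightarrow> b \<in> B"
  unfolding same_block_def using partition_on_block_eq[of A P B] by blast

lemma partition_on_Rest: "partition_on A P \<Longrightarrow> z \<subseteq> A \<Longrightarrow> partition_on z (Rest z P)"
proof -
  assume "partition_on A P" "z \<subseteq> A"
  moreover have "Rest z P = (\<inter>) z ` P - {{}}"
    unfolding Rest_def by (auto simp: Int_commute)
  moreover have "z \<inter> A = z" using \<open>z \<subseteq> A\<close> by blast
  ultimately show ?thesis using partition_on_restrict[of A P z] by simp
qed

lemma same_block_Rest:
  assumes "a \<in> z" "b \<in> z"
  shows "same_block (Rest z P) a b \<longleftrightarrow> same_block P a b"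
proof
  assume "same_block P a b"
  then obtain B where "B \<in> P" "a \<in> B" "b \<in> B" unfolding same_block_def by blast
  then show "same_block (Rest z P) a b"
    unfolding same_block_def Rest_def using assms by (intro bexI[of _ "B \<inter> z"]) auto
qed (auto simp: same_block_def Rest_def)

lemma partition_on_eqI:
  assumes P: "partition_on A P" and Q: "partition_on A Q"
    and same: "\<And>a b. a \<in> A \<Longrightarrow> b \<in> A \<Longrightarrow> same_block P a b \<longleftrightarrow> same_block Q a b"
  shows "P = Q"
proof -
  have "P1 \<subseteq> P2" if P1: "partition_on A P1" and P2: "partition_on A P2"
    and same12: "\<And>a b. a \<in> A \<Longrightarrow> b \<in> A \<Longrightarrow> same_block P1 a b \<longleftrightarrow> same_block P2 a b"
    for P1 P2 :: "'a set set"
  proof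
    fix B assume B: "B \<in> P1"
    then obtain a where a: "a \<in> B" using P1 unfolding partition_on_def by (metis all_not_in_conv)
    then have aA: "a \<in> A" using P1 B unfolding partition_on_def by blast
    then obtain C where C: "C \<in> P2" "a \<in> C" using P2 unfolding partition_on_def by blast
    have "b \<in> B \<longleftrightarrow> b \<in> C" for b
    proof (cases "b \<in> A")
      case True
      then show ?thesis
        using same12[OF aA True] same_block_iff_mem[OF P1 B a] same_block_iff_mem[OF P2 C] by simp
    next
      case False
      then show ?thesis using B C P1 P2 unfolding partition_on_def by blast
    qed
    then show "B \<in> P2" using C by (metis subsetI subset_antisym)
  qed
  from this[OF P Q same] this[OF Q P] same show ?thesis by blast
qed

lemma Rest_mem_iff_same_block:
  assumes P: "partition_on A P" and z: "z \<subseteq> A" and E: "E \<subseteq> Parts z"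
  shows "Rest z P \<in> E \<longleftrightarrow> (\<exists>R\<in>E. \<forall>a\<in>z. \<forall>b\<in>z. same_block R a b \<longleftrightarrow> same_block P a b)"
proof
  assume "\<exists>R\<in>E. \<forall>a\<in>z. \<forall>b\<in>z. same_block R a b \<longleftrightarrow> same_block P a b"
  then obtain R where R: "R \<in> E" "\<forall>a\<in>z. \<forall>b\<in>z. same_block R a b \<longleftrightarrow> same_block P a b"
    by blast
  have "R = Rest z P"
  proof (rule partition_on_eqI)
    show "partition_on z R" using R E by (auto simp: mem_Parts_iff)
  qed (use R partition_on_Rest[OF P z] in \<open>auto simp: same_block_Rest\<close>)
  then show "Rest z P \<in> E" using R by simp
next
  assume "Rest z P \<in> E"
  moreover have "\<forall>a\<in>z. \<forall>b\<in>z. same_block (Rest z P) a b \<longleftrightarrow> same_block P a b"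
    by (simp add: same_block_Rest)
  ultimately show "\<exists>R\<in>E. \<forall>a\<in>z. \<forall>b\<in>z. same_block R a b \<longleftrightarrow> same_block P a b" by blast
qed

lemma finite_Parts: "finite z \<Longrightarrow> finite (Parts z)"
  by (rule finite_subset[of _ "Pow (Pow z)"]) (auto simp: Parts_def partition_on_def)

lemma space_part_measure: "space (part_measure A X) = X"
  unfolding part_measure_def by (simp add: space_measure_of_conv)

lemma Rest_preimage_in_part_measure:
  "finite z \<Longrightarrow> z \<subseteq> A \<Longrightarrow> E \<subseteq> Parts z \<Longrightarrow> {P \<in> X. Rest z P \<in> E} \<in> sets (part_measure A X)"
  unfolding part_measure_def by (rule in_measure_of) auto

lemma pred_same_block:
  assumes "X \<subseteq> Parts A"
  shows "Measurable.pred (part_measure A X) (\<lambda>P. same_block P a b)"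
proof (cases "a \<in> A \<and> b \<in> A")
  case True
  have "{P \<in> X. same_block P a b} = {P \<in> X. Rest {a, b} P \<in> {R \<in> Parts {a, b}. same_block R a b}}"
    using assms True partition_on_Rest[of A _ "{a, b}"] same_block_Rest[of a "{a, b}" b]
    by (auto simp: mem_Parts_iff)
  also have "\<dots> \<in> sets (part_measure A X)"
    using True by (intro Rest_preimage_in_part_measure) auto
  finally show ?thesis by (simp add: pred_def space_part_measure)
next
  case False
  then have "{P \<in> space (part_measure A X). same_block P a b} = {}"
    using assms same_block_imp_mem by (fastforce simp: mem_Parts_iff space_part_measure)
  then show ?thesis unfolding pred_def by (metis sets.empty_sets)
qed

lemma measurable_part_measureI:
  assumes f: "f \<in> space M \<rightarrow> X" and X: "X \<subseteq> Parts A"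
    and same: "\<And>a b. a \<in> A \<Longrightarrow> b \<in> A \<Longrightarrow> Measurable.pred M (\<lambda>\<omega>. same_block (f \<omega>) a b)"
  shows "f \<in> measurable M (part_measure A X)"
  unfolding part_measure_def
proof (rule measurable_measure_of)
  fix Y assume "Y \<in> {{P \<in> X. Rest z P \<in> E} | z E. finite z \<and> z \<subseteq> A \<and> E \<subseteq> Parts z}"
  then obtain z E where Y: "Y = {P \<in> X. Rest z P \<in> E}" and z: "finite z" "z \<subseteq> A"
    and E: "E \<subseteq> Parts z" by blast
  have "f -` Y \<inter> space M =
      {\<omega> \<in> space M. \<exists>R\<in>E. \<forall>a\<in>z. \<forall>b\<in>z. same_block R a b \<longleftrightarrow> same_block (f \<omega>) a b}"
    using f X z E Rest_mem_iff_same_block unfolding Y by (fastforce simp: mem_Parts_iff)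
  also have "\<dots> \<in> sets M"
  proof -
    have "finite E" using finite_subset[OF E finite_Parts[OF z(1)]] .
    moreover have "Measurable.pred M (\<lambda>\<omega>. same_block R a b \<longleftrightarrow> same_block (f \<omega>) a b)"
      if "a \<in> z" "b \<in> z" for R a b
      using same that z(2) by (intro pred_intros_logic measurable_const) auto
    ultimately show ?thesis
      using z(1) unfolding pred_def[symmetric] by (intro pred_intros_finite) auto
  qed
  finally show "f -` Y \<inter> space M \<in> sets M" .
qed (use f in auto)

lemma measurable_Rest:
  assumes sets: "sets M = sets (part_measure A X)" and X: "X \<subseteq> Parts A"
    and z: "finite z" "z \<subseteq> A"
  shows "Rest z \<in> measurable M (count_space (Parts z))"
proof (rule measurableI)
  have space: "space M = X" using sets_eq_imp_space_eq[OF sets] by (simp add: space_part_measure)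
  show "Rest z P \<in> space (count_space (Parts z))" if "P \<in> space M" for P
  proof -
    have "partition_on A P" using that X by (auto simp: space mem_Parts_iff)
    then show ?thesis using partition_on_Rest z(2) by (simp add: mem_Parts_iff)
  qed
  show "Rest z -` E \<inter> space M \<in> sets M" if "E \<in> sets (count_space (Parts z))" for E
  proof -
    have "Rest z -` E \<inter> space M = {P \<in> X. Rest z P \<in> E}" by (auto simp: space)
    then show ?thesis using Rest_preimage_in_part_measure[OF z, of E X] that by (simp add: sets)
  qed
qed

section \<open>Separation probabilities from the two-point marginals\<close>

lemma Parts_doubleton:
  assumes "a \<noteq> b"
  shows "Parts {a, b} = {{{a, b}}, {{a}, {b}}}"
proof (intro set_eqI iffI)
  have one: "partition_on {a, b} {{a, b}}" by (simp add: partition_on_space)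
  have two: "partition_on {a, b} {{a}, {b}}" using partition_on_singletons[of "{a, b}"] by simp
  fix P assume "P \<in> Parts {a, b}"
  then have P: "partition_on {a, b} P" by (simp add: mem_Parts_iff)
  have refl: "same_block P a a" "same_block P b b" using same_block_refl[OF P] by auto
  show "P \<in> {{{a, b}}, {{a}, {b}}}"
  proof (cases "same_block P a b")
    case True
    then have "P = {{a, b}}"
      using refl same_block_sym[OF True]
        by (intro partition_on_eqI[OF P one]) (auto simp: same_block_def)
    then show ?thesis by simp
  next
    case False
    then have "P = {{a}, {b}}"
      using refl same_block_sym assms
      by (intro partition_on_eqI[OF P two]) (auto simp: same_block_def)
    then show ?thesis by simp
  qed
next
  fix P assume "P \<in> {{{a, b}}, {{a}, {b}}}"
  then show "P \<in> Parts {a, b}"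
    using partition_on_singletons[of "{a, b}"] by (auto simp: mem_Parts_iff partition_on_space)
qed

lemma arg_rate_split_doubleton:
  assumes "a < b"
  shows "arg_rate \<rho> {{a, b}} {{a}, {b}} = \<rho> * real_of_rat (b - a)"
proof -
  have "split_at {{a, b}} {a, b} a b = {{a}, {b}}"
    using assms unfolding split_at_def by auto
  then have "split_triples {{a, b}} {{a}, {b}} = {({a, b}, a, b)}"
    using assms unfolding split_triples_def by auto
  moreover have "\<not> merge_step {{a, b}} {{a}, {b}}" unfolding merge_step_def by auto
  ultimately show ?thesis unfolding arg_rate_def by simp
qed

lemma arg_rate_merge_doubleton:
  assumes "a < b"
  shows "arg_rate \<rho> {{a}, {b}} {{a, b}} = 1"
proof -
  have "merge_step {{a}, {b}} {{a, b}}"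
    unfolding merge_step_def using assms by (intro bexI[of _ "{a}"] bexI[of _ "{b}"]) auto
  moreover have "split_triples {{a}, {b}} {{a, b}} = {}" unfolding split_triples_def by auto
  ultimately show ?thesis unfolding arg_rate_def by simp
qed

lemma arg_invariant_doubleton_measure:
  fixes a b :: rat
  assumes ab: "a < b" and \<rho>: "0 \<le> \<rho>" and inv: "arg_invariant \<rho> {a, b} M"
  defines "c \<equiv> \<rho> * real_of_rat (b - a)"
  shows "measure M {{{a}, {b}}} = c / (1 + c)" and "measure M {{{a, b}}} = 1 / (1 + c)"
proof -
  define T S where "T = {{a, b}}" and "S = {{a}, {b}}"
  have TS: "T \<noteq> S" using ab by (auto simp: T_def S_def doubleton_eq_iff)
  have Parts: "Parts {a, b} = {T, S}" using ab by (simp add: T_def S_def Parts_doubleton)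
  interpret prob_space M using inv by (simp add: arg_invariant_def)
  have rates: "arg_rate \<rho> T S = c" "arg_rate \<rho> S T = 1"
    using ab arg_rate_split_doubleton arg_rate_merge_doubleton by (simp_all add: T_def S_def c_def)
  have "{T, S} - {S} = {T}" using TS by auto
  then have balance: "measure M {T} * c = measure M {S}"
    using inv by (simp add: arg_invariant_def Parts rates)
  have "sets M = Pow {T, S}" "space M = {T, S}" using inv by (simp_all add: arg_invariant_def Parts)
  then have total: "measure M {T} + measure M {S} = 1"
    using finite_measure_eq_sum_singleton[of "{T, S}"] TS prob_space by simp
  have "0 \<le> c" using ab \<rho> by (simp add: c_def)
  moreover have "measure M {T} * (1 + c) = 1" using balance total by (simp add: algebra_simps)
  ultimately have "measure M {T} = 1 / (1 + c)" by (simp add: field_simps)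
  with balance show "measure M {S} = c / (1 + c)" "measure M {T} = 1 / (1 + c)"
    unfolding S_def[symmetric] T_def[symmetric] by simp_all
qed

lemma ex1_arg_invariant_doubleton:
  fixes a b :: rat
  assumes ab: "a < b" and \<rho>: "0 \<le> \<rho>"
  shows "\<exists>!M. arg_invariant \<rho> {a, b} M"
proof -
  define c where "c = \<rho> * real_of_rat (b - a)"
  define T S where "T = {{a, b}}" and "S = {{a}, {b}}"
  have TS: "T \<noteq> S" using ab by (auto simp: T_def S_def doubleton_eq_iff)
  have Parts: "Parts {a, b} = {T, S}" using ab by (simp add: T_def S_def Parts_doubleton)
  have c: "0 \<le> c" using ab \<rho> by (simp add: c_def)
  define M where
    "M = point_measure {T, S} (\<lambda>x. if x = S then ennreal (c / (1 + c)) else ennreal (1 / (1 + c)))"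
  have sets_M: "sets M = Pow {T, S}" and space_M: "space M = {T, S}"
    by (simp_all add: M_def sets_point_measure space_point_measure)
  have emeasure_M: "emeasure M {S} = ennreal (c / (1 + c))" "emeasure M {T} = ennreal (1 / (1 + c))"
    using TS by (simp_all add: M_def emeasure_point_measure_finite)
  have "emeasure M {T, S} = ennreal (1 / (1 + c) + c / (1 + c))"
    using TS c by (simp add: M_def emeasure_point_measure_finite ennreal_plus add.commute)
  also have "1 / (1 + c) + c / (1 + c) = 1" using c by (simp add: field_simps)
  finally interpret M: prob_space M by (intro prob_spaceI) (simp add: space_M)
  have measure_M: "measure M {S} = c / (1 + c)" "measure M {T} = 1 / (1 + c)"
    using emeasure_M c by (simp_all add: M.emeasure_eq_measure)
  have rates: "arg_rate \<rho> T S = c" "arg_rate \<rho> S T = 1"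
    using ab arg_rate_split_doubleton arg_rate_merge_doubleton by (simp_all add: T_def S_def c_def)
  have "arg_invariant \<rho> {a, b} M"
    using TS M.prob_space_axioms
    by (auto simp: arg_invariant_def Parts sets_M space_M measure_M insert_Diff_if rates)
  moreover have "M' = M" if "arg_invariant \<rho> {a, b} M'" for M'
  proof -
    interpret M': prob_space M' using that by (simp add: arg_invariant_def)
    have "measure M' {S} = measure M {S}" "measure M' {T} = measure M {T}"
      using arg_invariant_doubleton_measure[OF ab \<rho> that] unfolding measure_M
      by (simp_all add: T_def S_def c_def)
    moreover have "sets M' = Pow {T, S}" using that by (simp add: arg_invariant_def Parts)
    ultimately show ?thesis
      by (intro measure_eqI_finite[OF _ sets_M])
        (auto simp: M'.emeasure_eq_measure M.emeasure_eq_measure)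
  qed
  ultimately show ?thesis by blast
qed

lemma emeasure_mu_rz_separated:
  fixes a b :: rat
  assumes ab: "a < b" and \<rho>: "0 \<le> \<rho>"
  defines "c \<equiv> \<rho> * real_of_rat (b - a)"
  shows "emeasure (mu_rz \<rho> {a, b}) {{{a}, {b}}} = ennreal (c / (1 + c))"
proof -
  have inv: "arg_invariant \<rho> {a, b} (mu_rz \<rho> {a, b})"
    unfolding mu_rz_def by (rule theI'[OF ex1_arg_invariant_doubleton[OF ab \<rho>]])
  then interpret prob_space "mu_rz \<rho> {a, b}" by (simp add: arg_invariant_def)
  show ?thesis
    using arg_invariant_doubleton_measure(1)[OF ab \<rho> inv] by (simp add: emeasure_eq_measure c_def)
qed

lemma emeasure_separated_le:
  assumes \<rho>: "0 \<le> \<rho>" and sets: "sets M = sets P_Q"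
    and ab: "a < b" "a \<in> Qplus" "b \<in> Qplus"
    and marginal: "distr M (count_space (Parts {a, b})) (Rest {a, b}) = mu_rz \<rho> {a, b}"
  shows "emeasure M {P \<in> space M. \<not> same_block P a b} \<le> ennreal (\<rho> * real_of_rat (b - a))"
proof -
  define c where "c = \<rho> * real_of_rat (b - a)"
  have c: "0 \<le> c" using \<rho> ab by (simp add: c_def)
  have space: "space M = Parts Qplus"
    using sets_eq_imp_space_eq[OF sets] by (simp add: P_Q_def space_part_measure)
  have Rest: "Rest {a, b} \<in> measurable M (count_space (Parts {a, b}))"
    using sets ab by (intro measurable_Rest[of _ Qplus "Parts Qplus"]) (auto simp: P_Q_def)
  have "{P \<in> space M. \<not> same_block P a b} = Rest {a, b} -` {{{a}, {b}}} \<inter> space M"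
  proof -
    have "Rest {a, b} P = {{a}, {b}} \<longleftrightarrow> \<not> same_block P a b" if "P \<in> space M" for P
    proof -
      have "partition_on Qplus P" using that by (simp add: space mem_Parts_iff)
      then have "Rest {a, b} P \<in> Parts {a, b}"
        using ab partition_on_Rest[of Qplus P "{a, b}"] by (simp add: mem_Parts_iff)
      then consider "Rest {a, b} P = {{a, b}}" | "Rest {a, b} P = {{a}, {b}}"
        using ab Parts_doubleton[of a b] by auto
      moreover have "same_block {{a, b}} a b" "\<not> same_block {{a}, {b}} a b"
        using ab by (auto simp: same_block_def)
      ultimately show ?thesis
        using same_block_Rest[of a "{a, b}" b P] ab by (cases; simp)
    qed
    then show ?thesis by auto
  qed
  also have "emeasure M \<dots> = emeasure (mu_rz \<rho> {a, b}) {{{a}, {b}}}"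
    using emeasure_distr[OF Rest, of "{{{a}, {b}}}"] ab marginal by (simp add: Parts_doubleton)
  also have "\<dots> = ennreal (c / (1 + c))"
    using emeasure_mu_rz_separated[OF ab(1) \<rho>] by (simp add: c_def)
  also have "\<dots> \<le> ennreal c"
    using c by (intro ennreal_leI) (simp add: divide_le_eq mult_le_cancel_left1)
  finally show ?thesis by (simp add: c_def)
qed

section \<open>Block changes along finite sets\<close>

text \<open>When no element of \<open>S\<close> exceeds \<open>a\<close>, \<open>succ_in S a = Min {}\<close> is unspecified.\<close>

definition succ_in :: "'a::linorder set \<Rightarrow> 'a \<Rightarrow> 'a" where
  "succ_in S a = Min {b \<in> S. a < b}"

definition block_changes :: "'a set set \<Rightarrow> 'a::linorder set \<Rightarrow> 'a set" where
  "block_changes P S = {a \<in> S. (\<exists>b\<in>S. a < b) \<and> \<not> same_block P a (succ_in S a)}"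

definition num_changes :: "'a set set \<Rightarrow> 'a::linorder set \<Rightarrow> nat" where
  "num_changes P S = card (block_changes P S)"

lemma succ_in:
  assumes "finite S" "b \<in> S" "a < b"
  shows "succ_in S a \<in> S" "a < succ_in S a" "\<And>c. c \<in> S \<Longrightarrow> a < c \<Longrightarrow> succ_in S a \<le> c"
proof -
  have "finite {b \<in> S. a < b}" "{b \<in> S. a < b} \<noteq> {}" using assms by auto
  then show "succ_in S a \<in> S" "a < succ_in S a" "\<And>c. c \<in> S \<Longrightarrow> a < c \<Longrightarrow> succ_in S a \<le> c"
    unfolding succ_in_def using Min_in by auto
qed

lemma succ_in_eqI:
  assumes "finite S" "b \<in> S" "a < b" "\<And>c. c \<in> S \<Longrightarrow> a < c \<Longrightarrow> b \<le> c"
  shows "succ_in S a = b"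
  unfolding succ_in_def using assms by (intro Min_eqI) auto

lemma succ_in_insert:
  assumes "finite S" "b \<in> S" "a < b"
  shows "succ_in (insert c S) a = (if a < c then min c (succ_in S a) else succ_in S a)"
proof -
  have "{x \<in> insert c S. a < x} = (if a < c then insert c {x \<in> S. a < x} else {x \<in> S. a < x})"
    by auto
  moreover have "finite {x \<in> S. a < x}" "{x \<in> S. a < x} \<noteq> {}" using assms by auto
  ultimately show ?thesis unfolding succ_in_def by simp
qed

lemma succ_in_insert_between:
  assumes S: "finite S" "b \<in> S" "a < b" and c: "a < c" "c < succ_in S a"
  shows "succ_in (insert c S) c = succ_in S a"
proof -
  have "{x \<in> insert c S. c < x} = {x \<in> S. a < x}"
    using c succ_in(3)[OF S] by (auto intro: less_le_trans)
  then show ?thesis unfolding succ_in_def by simp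
qed

text \<open>A change point \<open>a\<close> whose gap to its successor receives \<open>c\<close>, with \<open>c\<close> in the block
  of \<open>a\<close>, is replaced by \<open>c\<close>: the change then occurs between \<open>c\<close> and the old successor.\<close>

lemma block_changes_insert_map:
  assumes P: "partition_on A P" and S: "finite S" and a: "a \<in> block_changes P S"
  shows "(if a < c \<and> c < succ_in S a \<and> same_block P a c then c else a)
    \<in> block_changes P (insert c S)"
proof -
  from a obtain b where ab: "a \<in> S" "b \<in> S" "a < b"
    and sep: "\<not> same_block P a (succ_in S a)" unfolding block_changes_def by blast
  note succ = succ_in[OF S ab(2,3)]
  have succ_insert: "succ_in (insert c S) a = (if a < c then min c (succ_in S a) else succ_in S a)"
    by (rule succ_in_insert[OF S ab(2,3)])
  show ?thesis
  proof (cases "a < c \<and> c < succ_in S a")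
    case between: True
    then have "succ_in (insert c S) a = c" using succ_insert by simp
    show ?thesis
    proof (cases "same_block P a c")
      case True
      have "succ_in (insert c S) c = succ_in S a"
        using succ_in_insert_between[OF S ab(2,3)] between by simp
      moreover have "\<not> same_block P c (succ_in S a)" using same_block_trans[OF P True] sep by blast
      ultimately show ?thesis using between True succ(1) unfolding block_changes_def by auto
    next
      case False
      then show ?thesis
        using between \<open>succ_in (insert c S) a = c\<close> ab unfolding block_changes_def by auto
    qed
  next
    case False
    then have "succ_in (insert c S) a = succ_in S a" using succ_insert by auto
    then show ?thesis using False ab succ sep unfolding block_changes_def by auto
  qed
qed

lemma inj_on_block_changes_insert_map:
  assumes S: "finite S" and c: "c \<notin> S"
  shows "inj_on (\<lambda>a. if a < c \<and> c < succ_in S a \<and> same_block P a c then c else a)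
    (block_changes P S)"
    (is "inj_on ?f _")
proof (rule inj_onI)
  fix a a' assume a: "a \<in> block_changes P S" and a': "a' \<in> block_changes P S" and eq: "?f a = ?f a'"
  have S_mem: "a \<in> S" "a' \<in> S" using a a' unfolding block_changes_def by auto
  have maps_to_c: "x < c \<and> c < succ_in S x" if "x \<in> S" "?f x = c" for x
    using that c by (auto split: if_splits)
  have not_less: "\<not> x < y" if "x \<in> S" "y \<in> S" "?f x = c" "?f y = c" for x y
    using maps_to_c[OF that(1,3)] maps_to_c[OF that(2,4)] succ_in(3)[OF S that(2) _ that(2)]
    by (meson leD less_trans)
  show "a = a'"
  proof (cases "?f a = c")
    case True
    then show ?thesis using not_less[OF S_mem] not_less[OF S_mem(2,1)] eq by fastforce
  next
    case False
    then show ?thesis using eq by (auto split: if_splits)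
  qed
qed

lemma num_changes_insert_le:
  assumes P: "partition_on A P" and S: "finite S"
  shows "num_changes P S \<le> num_changes P (insert c S)"
proof (cases "c \<in> S")
  case False
  have "finite (block_changes P (insert c S))" using S unfolding block_changes_def by simp
  then have "card (block_changes P S) \<le> card (block_changes P (insert c S))"
    using block_changes_insert_map[OF P S] inj_on_block_changes_insert_map[OF S False]
    by (intro card_inj_on_le) auto
  then show ?thesis by (simp add: num_changes_def)
qed (simp add: insert_absorb)

lemma num_changes_mono:
  assumes P: "partition_on A P" and T: "finite T" "S \<subseteq> T"
  shows "num_changes P S \<le> num_changes P T"
proof -
  have S: "finite S" using T finite_subset by blast
  have "num_changes P S \<le> num_changes P (D \<union> S)" if "finite D" for D
    using that
  proof induction
    case (insert d D)
    then show ?case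
      using num_changes_insert_le[OF P, of "D \<union> S" d] S by simp
  qed simp
  then show ?thesis using T Un_absorb2 by metis
qed

lemma sum_succ_in_diff:
  fixes F :: "'a::linordered_idom set"
  assumes "finite F" "F \<noteq> {}"
  shows "(\<Sum>a\<in>{a \<in> F. \<exists>b\<in>F. a < b}. succ_in F a - a) = Max F - Min F"
  using assms
proof (induction F rule: finite_linorder_min_induct)
  case (insert r T)
  show ?case
  proof (cases "T = {}")
    case False
    let ?T' = "{a \<in> T. \<exists>b\<in>T. a < b}"
    have r_less: "\<forall>t\<in>T. r < t" by (rule insert(2))
    have "{a \<in> insert r T. \<exists>b\<in>insert r T. a < b} = insert r ?T'"
      using r_less False by auto
    moreover have "r \<notin> ?T'" "finite ?T'" using r_less insert(1) by auto
    moreover have "succ_in (insert r T) a = succ_in T a" if a: "a \<in> ?T'" for a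
    proof -
      obtain b where "b \<in> T" "a < b" using a by blast
      moreover have "\<not> a < r" using a r_less by force
      ultimately show ?thesis using succ_in_insert[OF insert(1)] by simp
    qed
    moreover have "succ_in (insert r T) r = Min T"
      using r_less False insert(1) by (intro succ_in_eqI) auto
    ultimately have "(\<Sum>a\<in>{a \<in> insert r T. \<exists>b\<in>insert r T. a < b}. succ_in (insert r T) a - a)
        = (Min T - r) + (Max T - Min T)"
      using insert.IH False by simp
    moreover have "Max (insert r T) = Max T" "Min (insert r T) = r"
      using r_less False insert(1) Max_in[of T] Min_in[of T]
      by (simp_all add: Max_insert Min_insert max_def min_def less_imp_le)
    ultimately show ?thesis by simp
  next
    case True
    then show ?thesis by (auto intro!: sum.neutral)
  qed
qed simp

lemma card_le_num_changes:
  assumes I: "finite I"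
    and pair: "\<And>i. i \<in> I \<Longrightarrow> r i < s i \<and> \<not> same_block P (r i) (s i)"
    and disjoint: "\<And>i j. i \<in> I \<Longrightarrow> j \<in> I \<Longrightarrow> i \<noteq> j \<Longrightarrow> s i < r j \<or> s j < r i"
  shows "card I \<le> num_changes P (r ` I \<union> s ` I)"
proof -
  let ?W = "r ` I \<union> s ` I"
  have W: "finite ?W" using I by simp
  have "succ_in ?W (r i) = s i" if i: "i \<in> I" for i
  proof (rule succ_in_eqI[OF W])
    fix c assume "c \<in> ?W" "r i < c"
    then show "s i \<le> c"
      using pair disjoint[OF i] i by (fastforce dest: less_trans[of _ "r _"] intro: less_imp_le)
  qed (use pair i in auto)
  then have "r ` I \<subseteq> block_changes P ?W" using pair unfolding block_changes_def by force
  moreover have "inj_on r I"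
    using pair disjoint by (metis inj_onI less_asym)
  moreover have "finite (block_changes P ?W)" using W unfolding block_changes_def by simp
  ultimately show ?thesis
    unfolding num_changes_def by (metis card_image card_mono)
qed

section \<open>Almost surely bounded numbers of block changes\<close>

lemma num_changes_eq_sum:
  "finite F \<Longrightarrow> num_changes P F =
     (\<Sum>a\<in>{a \<in> F. \<exists>b\<in>F. a < b}. if same_block P a (succ_in F a) then 0 else 1)"
  unfolding num_changes_def block_changes_def
  by (simp add: sum.If_cases) (auto intro!: arg_cong[where f = card])

lemma of_rat_le_of_nat_iff: "real_of_rat q \<le> real n \<longleftrightarrow> q \<le> of_nat n"
  by (metis of_rat_less_eq of_rat_of_nat_eq)

lemma countable_exhausting_finite_sets:
  assumes "countable Q" "Q \<noteq> {}"
  obtains F :: "nat \<Rightarrow> 'a set" where "\<And>k. finite (F k)" "\<And>k. F k \<noteq> {}" "\<And>k. F k \<subseteq> Q" "incseq F"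
    "\<And>S. finite S \<Longrightarrow> S \<subseteq> Q \<Longrightarrow> \<exists>k. S \<subseteq> F k"
proof
  let ?F = "\<lambda>k. from_nat_into Q ` {..k}"
  show "finite (?F k)" "?F k \<noteq> {}" "?F k \<subseteq> Q" for k
    using from_nat_into[OF assms(2)] by auto
  show "incseq ?F" by (intro monoI image_mono) auto
  fix S assume S: "finite S" "S \<subseteq> Q"
  have "S \<subseteq> ?F (Max (insert 0 (to_nat_on Q ` S)))"
  proof
    fix s assume "s \<in> S"
    then have "from_nat_into Q (to_nat_on Q s) = s"
      and "to_nat_on Q s \<le> Max (insert 0 (to_nat_on Q ` S))"
      using S assms by auto
    then show "s \<in> ?F (Max (insert 0 (to_nat_on Q ` S)))" by (metis atMost_iff image_eqI)
  qed
  then show "\<exists>k. S \<subseteq> ?F k" ..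
qed

lemma AE_bounded_if_nn_integral_bounded:
  fixes g :: "nat \<Rightarrow> 'a \<Rightarrow> ennreal"
  assumes mono: "\<And>k. AE x in M. g k x \<le> g (Suc k) x" and measurable: "\<And>k. g k \<in> borel_measurable M"
    and bounded: "\<And>k. (\<integral>\<^sup>+x. g k x \<partial>M) \<le> ennreal C"
  shows "AE x in M. \<exists>K::nat. \<forall>k. g k x \<le> of_nat K"
proof -
  have "(\<integral>\<^sup>+x. (SUP k. g k x) \<partial>M) = (SUP k. \<integral>\<^sup>+x. g k x \<partial>M)"
    by (rule nn_integral_monotone_convergence_SUP_AE[where f = g, OF mono measurable])
  also have "\<dots> \<le> ennreal C" using bounded by (rule SUP_least)
  also have "\<dots> < \<infinity>" by simp
  finally have "(\<integral>\<^sup>+x. (SUP k. g k x) \<partial>M) \<noteq> \<infinity>" by simp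
  then have "AE x in M. (SUP k. g k x) \<noteq> \<infinity>"
    using measurable by (intro nn_integral_noteq_infinite) auto
  then show ?thesis
  proof (rule AE_mp, intro AE_I2 impI)
    fix x assume "(SUP k. g k x) \<noteq> \<infinity>"
    then have "(SUP k. g k x) < top" by (metis infinity_ennreal_def less_top)
    then obtain K :: nat where "(SUP k. g k x) < of_nat K" using ennreal_Ex_less_of_nat by blast
    then have "g k x \<le> of_nat K" for k using SUP_upper[of k UNIV "\<lambda>k. g k x"] by simp
    then show "\<exists>K::nat. \<forall>k. g k x \<le> of_nat K" by blast
  qed
qed

definition bounded_changes :: "rat set set \<Rightarrow> bool" where
  "bounded_changes P \<longleftrightarrow>
     (\<forall>n::nat. \<exists>K. \<forall>S. finite S \<and> S \<subseteq> {0..of_nat n} \<longrightarrow> num_changes P S \<le> K)"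

lemma card_separated_pairs_le:
  assumes "bounded_changes P"
  obtains K where "\<And>(I :: 'i set) r s. finite I \<Longrightarrow>
      (\<And>i. i \<in> I \<Longrightarrow> 0 \<le> r i \<and> r i < s i \<and> s i \<le> of_nat n \<and> \<not> same_block P (r i) (s i)) \<Longrightarrow>
      (\<And>i j. i \<in> I \<Longrightarrow> j \<in> I \<Longrightarrow> i \<noteq> j \<Longrightarrow> s i < r j \<or> s j < r i) \<Longrightarrow> card I \<le> K"
proof -
  obtain K where K: "\<forall>S. finite S \<and> S \<subseteq> {0..of_nat n} \<longrightarrow> num_changes P S \<le> K"
    using assms unfolding bounded_changes_def by blast
  have bound: "card I \<le> K"
    if I: "finite I"
      and pair: "\<And>i. i \<in> I \<Longrightarrow> 0 \<le> r i \<and> r i < s i \<and> s i \<le> of_nat n \<and> \<not> same_block P (r i) (s i)"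
      and disjoint: "\<And>i j. i \<in> I \<Longrightarrow> j \<in> I \<Longrightarrow> i \<noteq> j \<Longrightarrow> s i < r j \<or> s j < r i"
    for I :: "'i set" and r s
  proof -
    have "card I \<le> num_changes P (r ` I \<union> s ` I)"
    proof (rule card_le_num_changes[OF I])
      fix i assume "i \<in> I"
      then show "r i < s i \<and> \<not> same_block P (r i) (s i)" using pair by blast
    qed (rule disjoint)
    also have "\<dots> \<le> K"
    proof (rule K[rule_format, OF conjI])
      show "r ` I \<union> s ` I \<subseteq> {0..of_nat n}"
      proof
        fix y assume "y \<in> r ` I \<union> s ` I"
        then obtain i where "i \<in> I" "y = r i \<or> y = s i" by blast
        with pair[of i] show "y \<in> {0..of_nat n}" by auto
      qed
    qed (use I in simp)
    finally show ?thesis .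
  qed
  show thesis by (rule that[OF bound])
qed

locale separation_rate =
  fixes M :: "rat set set measure" and \<rho> :: real
  assumes sets_eq: "sets M = sets P_Q" and rate_nonneg: "0 \<le> \<rho>"
    and separation_le: "\<And>a b. a \<in> Qplus \<Longrightarrow> b \<in> Qplus \<Longrightarrow> a < b \<Longrightarrow>
      emeasure M {P \<in> space M. \<not> same_block P a b} \<le> ennreal (\<rho> * real_of_rat (b - a))"
begin

lemma space_eq: "space M = Parts Qplus"
  using sets_eq_imp_space_eq[OF sets_eq] by (simp add: P_Q_def space_part_measure)

lemma separated_sets: "{P \<in> space M. \<not> same_block P (a :: rat) b} \<in> sets M"
proof -
  have "{P \<in> space M. same_block P a b} \<in> sets M"
    using pred_same_block[of "Parts Qplus" Qplus a b] sets_eq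
    by (simp add: pred_def P_Q_def space_eq space_part_measure)
  moreover have "{P \<in> space M. \<not> same_block P a b} = space M - {P \<in> space M. same_block P a b}"
    by auto
  ultimately show ?thesis by auto
qed

lemma of_nat_num_changes:
  assumes "finite F" "P \<in> space M"
  shows "of_nat (num_changes P F) =
    (\<Sum>a\<in>{a \<in> F. \<exists>b\<in>F. a < b}. indicator {P \<in> space M. \<not> same_block P a (succ_in F a)} P :: ennreal)"
  unfolding num_changes_eq_sum[OF assms(1)] of_nat_sum
  using assms(2) by (intro sum.cong) (auto simp: indicator_def)

lemma nn_integral_num_changes_le:
  assumes F: "finite F" "F \<subseteq> Qplus" "F \<noteq> {}"
  shows "(\<integral>\<^sup>+P. of_nat (num_changes P F) \<partial>M) \<le> ennreal (\<rho> * real_of_rat (Max F - Min F))"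
proof -
  let ?F' = "{a \<in> F. \<exists>b\<in>F. a < b}"
  have succ: "succ_in F a \<in> F" "a < succ_in F a" if "a \<in> ?F'" for a
    using that succ_in[OF F(1)] by auto
  have "(\<integral>\<^sup>+P. of_nat (num_changes P F) \<partial>M) =
      (\<integral>\<^sup>+P. (\<Sum>a\<in>?F'. indicator {P \<in> space M. \<not> same_block P a (succ_in F a)} P) \<partial>M)"
    using F(1) by (intro nn_integral_cong) (simp add: of_nat_num_changes)
  also have "\<dots> = (\<Sum>a\<in>?F'. emeasure M {P \<in> space M. \<not> same_block P a (succ_in F a)})"
    by (subst nn_integral_sum) (auto intro: borel_measurable_indicator simp: separated_sets)
  also have "\<dots> \<le> (\<Sum>a\<in>?F'. ennreal (\<rho> * real_of_rat (succ_in F a - a)))"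
    using succ F(2) by (intro sum_mono separation_le) auto
  also have "\<dots> = ennreal (\<Sum>a\<in>?F'. \<rho> * real_of_rat (succ_in F a - a))"
    using succ rate_nonneg by (intro sum_ennreal mult_nonneg_nonneg) (auto simp: less_imp_le)
  also have "(\<Sum>a\<in>?F'. \<rho> * real_of_rat (succ_in F a - a))
      = \<rho> * real_of_rat (\<Sum>a\<in>?F'. succ_in F a - a)"
    by (simp add: sum_distrib_left of_rat_sum)
  also have "(\<Sum>a\<in>?F'. succ_in F a - a) = Max F - Min F"
    using F(1,3) by (rule sum_succ_in_diff)
  finally show ?thesis .
qed

lemma AE_num_changes_bounded:
  "AE P in M. \<exists>K. \<forall>S. finite S \<and> S \<subseteq> {0..of_nat n} \<longrightarrow> num_changes P S \<le> K"
proof -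
  let ?Q = "{0..of_nat n :: rat}"
  have "countable ?Q" "?Q \<noteq> {}" by auto
  then obtain F :: "nat \<Rightarrow> rat set"
    where F: "\<And>k. finite (F k)" "\<And>k. F k \<noteq> {}" "\<And>k. F k \<subseteq> ?Q" "incseq F"
    and exhaust: "\<And>S. finite S \<Longrightarrow> S \<subseteq> ?Q \<Longrightarrow> \<exists>k. S \<subseteq> F k"
    by (rule countable_exhausting_finite_sets) blast
  have FQ: "F k \<subseteq> Qplus" for k using F(3)[of k] by (auto simp: Qplus_def)
  define g where "g k P = (of_nat (num_changes P (F k)) :: ennreal)" for k P
  have g_measurable: "g k \<in> borel_measurable M" for k
    unfolding g_def using F(1)
    by (subst measurable_cong[OF of_nat_num_changes])
      (auto intro!: borel_measurable_sum borel_measurable_indicator separated_sets)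
  have g_mono: "AE P in M. g k P \<le> g (Suc k) P" for k
    using num_changes_mono[of Qplus _ "F (Suc k)" "F k"] F(1) \<open>incseq F\<close>
    by (intro AE_I2) (auto simp: g_def space_eq mem_Parts_iff incseq_Suc_iff)
  have g_integral: "(\<integral>\<^sup>+P. g k P \<partial>M) \<le> ennreal (\<rho> * real n)" for k
  proof -
    have "Max (F k) \<in> ?Q" "Min (F k) \<in> ?Q"
      using F(3)[of k] Max_in[OF F(1,2)] Min_in[OF F(1,2)] by blast+
    then have "Max (F k) - Min (F k) \<le> of_nat n" by simp
    then have "real_of_rat (Max (F k) - Min (F k)) \<le> real n" by (simp add: of_rat_le_of_nat_iff)
    then have "ennreal (\<rho> * real_of_rat (Max (F k) - Min (F k))) \<le> ennreal (\<rho> * real n)"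
      using rate_nonneg by (intro ennreal_leI mult_left_mono)
    with nn_integral_num_changes_le[OF F(1) FQ F(2)] show ?thesis unfolding g_def
      by (rule order_trans)
  qed
  have "AE P in M. \<exists>K::nat. \<forall>k. g k P \<le> of_nat K"
    using g_mono g_measurable g_integral by (rule AE_bounded_if_nn_integral_bounded)
  then show ?thesis
  proof (rule AE_mp, intro AE_I2 impI)
    fix P assume P: "P \<in> space M" and "\<exists>K::nat. \<forall>k. g k P \<le> of_nat K"
    then obtain K :: nat where K: "\<And>k. g k P \<le> of_nat K" by blast
    show "\<exists>K. \<forall>S. finite S \<and> S \<subseteq> ?Q \<longrightarrow> num_changes P S \<le> K"
    proof (intro exI allI impI)
      fix S assume "finite S \<and> S \<subseteq> ?Q"
      then obtain k where "S \<subseteq> F k" using exhaust by blast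
      then have "num_changes P S \<le> num_changes P (F k)"
        using P F(1) by (intro num_changes_mono[of Qplus]) (auto simp: space_eq mem_Parts_iff)
      also have "\<dots> \<le> K" using K[of k] by (simp add: g_def)
      finally show "num_changes P S \<le> K" .
    qed
  qed
qed

lemma AE_bounded_changes: "AE P in M. bounded_changes P"
  unfolding bounded_changes_def using AE_num_changes_bounded by (subst AE_all_countable) blast

end

section \<open>Right germs\<close>

definition rat_right_cont :: "rat set set \<Rightarrow> bool" where
  "rat_right_cont P \<longleftrightarrow> (\<forall>x\<in>Qplus. \<exists>e>0. \<forall>q. x \<le> q \<and> q < x + e \<longrightarrow> same_block P x q)"

definition right_germ :: "rat set set \<Rightarrow> real \<Rightarrow> rat set \<Rightarrow> bool" where
  "right_germ P x B \<longleftrightarrow> B \<in> P \<and> (\<exists>\<epsilon>>0. \<forall>q. x \<le> real_of_rat q \<and> real_of_rat q < x + \<epsilon> \<longrightarrow> q \<in> B)"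

definition good_partition :: "rat set set \<Rightarrow> bool" where
  "good_partition P \<longleftrightarrow> partition_on Qplus P \<and> rat_right_cont P \<and> bounded_changes P"

lemma mem_QplusI: "0 \<le> x \<Longrightarrow> x \<le> real_of_rat q \<Longrightarrow> q \<in> Qplus"
  unfolding Qplus_def by (metis mem_Collect_eq order.trans zero_le_of_rat_iff)

lemma exists_rat_between:
  fixes x :: real
  assumes "0 \<le> x" "x < y"
  obtains q where "q \<in> Qplus" "x < real_of_rat q" "real_of_rat q < y"
proof -
  obtain q where q: "x < real_of_rat q" "real_of_rat q < y" using of_rat_dense[OF assms(2)] by blast
  moreover from q assms have "q \<in> Qplus" by (intro mem_QplusI) auto
  ultimately show thesis using that by blast
qed

lemma rat_right_cont_if_right_cont_Q:
  assumes "right_cont_Q P"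
  shows "rat_right_cont P"
  unfolding rat_right_cont_def
proof
  fix x assume x: "x \<in> Qplus"
  define X where "X n = x + inverse (of_nat (Suc n))" for n :: nat
  have "X n \<in> Qplus" for n using x by (simp add: X_def Qplus_def)
  moreover have "decseq X"
    unfolding X_def by (intro decseq_SucI add_left_mono le_imp_inverse_le) auto
  moreover have "(\<lambda>n. real_of_rat (X n)) \<longlonglongrightarrow> real_of_rat x"
    unfolding X_def of_rat_add of_rat_inverse of_rat_of_nat_eq
    using tendsto_add[OF tendsto_const LIMSEQ_inverse_real_of_nat, of "real_of_rat x"] by simp
  ultimately obtain n S where S: "segment Qplus P S" "x \<in> S" "X n \<in> S"
    using assms x unfolding right_cont_Q_def eventually_sequentially by blast
  then obtain B where B: "B \<in> P" "S \<subseteq> B" unfolding segment_def by blast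
  show "\<exists>e>0. \<forall>q. x \<le> q \<and> q < x + e \<longrightarrow> same_block P x q"
  proof (intro exI conjI allI impI)
    fix q assume q: "x \<le> q \<and> q < x + inverse (of_nat (Suc n))"
    moreover have "convex_in Qplus S" using S(1) unfolding segment_def by blast
    moreover have "q \<in> Qplus" using q x by (simp add: Qplus_def)
    ultimately have "q \<in> S"
      using S(2,3) unfolding convex_in_def X_def by (meson less_imp_le)
    then show "same_block P x q" using B S(2) unfolding same_block_def by blast
  qed simp
qed

lemma right_germ_unique:
  assumes P: "partition_on Qplus P" and x: "0 \<le> x" and "right_germ P x B" "right_germ P x C"
  shows "B = C"
proof -
  obtain \<epsilon> \<delta> where "\<epsilon> > 0" "\<delta> > 0" "B \<in> P" "C \<in> P"
    and B: "\<And>q. x \<le> real_of_rat q \<Longrightarrow> real_of_rat q < x + \<epsilon> \<Longrightarrow> q \<in> B"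
    and C: "\<And>q. x \<le> real_of_rat q \<Longrightarrow> real_of_rat q < x + \<delta> \<Longrightarrow> q \<in> C"
    using assms(3,4) unfolding right_germ_def by blast
  moreover obtain q where "x < real_of_rat q" "real_of_rat q < x + min \<epsilon> \<delta>"
    using exists_rat_between[OF x, of "x + min \<epsilon> \<delta>"] \<open>\<epsilon> > 0\<close> \<open>\<delta> > 0\<close> by auto
  ultimately show ?thesis using partition_on_block_eq[OF P, of B C q] by auto
qed

lemma right_germ_of_rat:
  assumes P: "partition_on Qplus P" and "rat_right_cont P" and B: "B \<in> P" "q \<in> B"
  shows "right_germ P (real_of_rat q) B"
proof -
  have "q \<in> Qplus" using P B unfolding partition_on_def by blast
  then obtain e where "e > 0" and e: "\<And>r. q \<le> r \<Longrightarrow> r < q + e \<Longrightarrow> same_block P q r"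
    using assms(2) unfolding rat_right_cont_def by blast
  show ?thesis
    unfolding right_germ_def
  proof (intro conjI exI[of _ "real_of_rat e"] allI impI)
    fix r assume "real_of_rat q \<le> real_of_rat r \<and> real_of_rat r < real_of_rat q + real_of_rat e"
    then have "same_block P q r" using e by (simp flip: of_rat_add add: of_rat_less_eq of_rat_less)
    then show "r \<in> B" using same_block_iff_mem[OF P B] by simp
  qed (use B \<open>e > 0\<close> in auto)
qed

lemma right_germ_of_rat_mem: "right_germ P (real_of_rat q) B \<Longrightarrow> q \<in> B"
  unfolding right_germ_def by force

lemma right_germ_right_nbhd:
  assumes "right_germ P x B"
  obtains \<epsilon> where "\<epsilon> > 0" "\<And>y. x \<le> y \<Longrightarrow> y < x + \<epsilon> \<Longrightarrow> right_germ P y B"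
proof -
  obtain \<epsilon> where "\<epsilon> > 0" "B \<in> P" and B: "\<And>q. x \<le> real_of_rat q \<Longrightarrow> real_of_rat q < x + \<epsilon> \<Longrightarrow> q \<in> B"
    using assms unfolding right_germ_def by blast
  have "right_germ P y B" if "x \<le> y" "y < x + \<epsilon>" for y
    unfolding right_germ_def using that \<open>B \<in> P\<close> B by (intro conjI exI[of _ "x + \<epsilon> - y"]) auto
  with \<open>\<epsilon> > 0\<close> show thesis using that by blast
qed

lemma separated_pair_right_of_no_germ:
  assumes P: "partition_on Qplus P" and rc: "rat_right_cont P" and x: "0 \<le> x"
    and no_germ: "\<nexists>B. right_germ P x B" and "x < u"
  obtains r s where "x < real_of_rat r" "r < s" "real_of_rat s < u" "\<not> same_block P r s"
proof -
  obtain q where q: "q \<in> Qplus" "x < real_of_rat q" "real_of_rat q < u"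
    using exists_rat_between[OF x \<open>x < u\<close>] by blast
  then obtain B where B: "B \<in> P" "q \<in> B" using P unfolding partition_on_def by blast
  moreover have "u - x > 0" using \<open>x < u\<close> by simp
  ultimately have "\<not> (\<forall>q'. x \<le> real_of_rat q' \<and> real_of_rat q' < x + (u - x) \<longrightarrow> q' \<in> B)"
    using no_germ unfolding right_germ_def by blast
  then obtain q' where q': "x \<le> real_of_rat q'" "real_of_rat q' < u" "q' \<notin> B" by auto
  have "real_of_rat q' \<noteq> x"
  proof
    assume q'_x: "real_of_rat q' = x"
    have "q' \<in> Qplus" using x q'(1) by (rule mem_QplusI)
    then obtain C where "C \<in> P" "q' \<in> C" using P unfolding partition_on_def by blast
    then have "right_germ P (real_of_rat q') C" by (rule right_germ_of_rat[OF P rc])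
    then show False using no_germ q'_x by blast
  qed
  with q' have "x < real_of_rat q'" by simp
  have "\<not> same_block P q q'" using same_block_iff_mem[OF P B] q'(3) by blast
  then have sep: "\<not> same_block P q q'" "\<not> same_block P q' q"
    using same_block_sym[of P q' q] by blast+
  have "q \<noteq> q'" using B q' by blast
  then consider "q < q'" | "q' < q" by (rule linorder_neqE)
  then show thesis
  proof cases
    case 1
    then show thesis using that[of q q'] q sep q' by blast
  next
    case 2
    then show thesis using that[of q' q] q sep q' \<open>x < real_of_rat q'\<close> by blast
  qed
qed

lemma separated_chain_right_of_no_germ:
  assumes P: "partition_on Qplus P" and rc: "rat_right_cont P" and x: "0 \<le> x"
    and no_germ: "\<nexists>B. right_germ P x B"
  obtains p :: "nat \<Rightarrow> rat \<times> rat"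
  where "\<And>k. x < real_of_rat (fst (p k)) \<and> fst (p k) < snd (p k) \<and> real_of_rat (snd (p k)) < x + 1
      \<and> \<not> same_block P (fst (p k)) (snd (p k))"
    and "\<And>i j. i < j \<Longrightarrow> snd (p j) < fst (p i)"
proof -
  have step: "\<exists>r s. x < real_of_rat r \<and> r < s \<and> real_of_rat s < u \<and> \<not> same_block P r s"
    if "x < u" for u
    by (rule separated_pair_right_of_no_germ[OF P rc x no_germ that]) blast
  let ?pair = "\<lambda>p. x < real_of_rat (fst p) \<and> fst p < snd p \<and> real_of_rat (snd p) < x + 1
      \<and> \<not> same_block P (fst p) (snd p)"
  have start: "\<exists>p. ?pair p" using step[of "x + 1"] by auto
  have next_pair: "\<exists>p'. ?pair p' \<and> snd p' < fst p" if p: "?pair p" for p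
  proof -
    obtain r s where rs: "x < real_of_rat r" "r < s" "real_of_rat s < real_of_rat (fst p)"
      "\<not> same_block P r s"
      using step[of "real_of_rat (fst p)"] p by blast
    moreover have "real_of_rat (fst p) < real_of_rat (snd p)" using p by (simp add: of_rat_less)
    ultimately have "real_of_rat s < x + 1" using p by linarith
    then show ?thesis using rs p by (intro exI[of _ "(r, s)"]) (auto simp: of_rat_less)
  qed
  obtain p :: "nat \<Rightarrow> rat \<times> rat" where p: "\<And>k. ?pair (p k) \<and> snd (p (Suc k)) < fst (p k)"
    using dependent_nat_choice[where P = "\<lambda>_. ?pair" and Q = "\<lambda>_ p p'. snd p' < fst p",
        OF start next_pair]
    by blast
  have "snd (p j) < fst (p i)" if "i < j" for i j
    using that
  proof (induction j)
    case (Suc j)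
    then show ?case using p[of j] by (metis less_Suc_eq less_trans)
  qed simp
  with p show thesis using that by blast
qed

lemma exists_right_germ:
  assumes good: "good_partition P" and x: "0 \<le> x"
  obtains B where "right_germ P x B"
proof -
  have P: "partition_on Qplus P" and rc: "rat_right_cont P" and bc: "bounded_changes P"
    using good unfolding good_partition_def by auto
  have "\<exists>B. right_germ P x B"
  proof (rule ccontr)
    assume "\<nexists>B. right_germ P x B"
    then obtain p :: "nat \<Rightarrow> rat \<times> rat"
      where pair: "\<And>k. x < real_of_rat (fst (p k)) \<and> fst (p k) < snd (p k)
          \<and> real_of_rat (snd (p k)) < x + 1 \<and> \<not> same_block P (fst (p k)) (snd (p k))"
        and chain: "\<And>i j. i < j \<Longrightarrow> snd (p j) < fst (p i)"
      using separated_chain_right_of_no_germ[OF P rc x] by blast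
    obtain n :: nat where n: "x + 1 \<le> real n" using real_arch_simple by blast
    obtain K where K: "\<And>(I :: nat set) r s. finite I \<Longrightarrow>
        (\<And>i. i \<in> I \<Longrightarrow> 0 \<le> r i \<and> r i < s i \<and> s i \<le> of_nat n \<and> \<not> same_block P (r i) (s i)) \<Longrightarrow>
        (\<And>i j. i \<in> I \<Longrightarrow> j \<in> I \<Longrightarrow> i \<noteq> j \<Longrightarrow> s i < r j \<or> s j < r i) \<Longrightarrow> card I \<le> K"
      using card_separated_pairs_le[OF bc] by blast
    have "card {..K} \<le> K"
    proof (rule K[where r = "\<lambda>i. fst (p i)" and s = "\<lambda>i. snd (p i)"])
      fix i
      have "0 \<le> real_of_rat (fst (p i))" "real_of_rat (snd (p i)) \<le> real n"
        using pair[of i] x n by linarith+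
      then show "0 \<le> fst (p i) \<and> fst (p i) < snd (p i) \<and> snd (p i) \<le> of_nat n
          \<and> \<not> same_block P (fst (p i)) (snd (p i))"
        using pair[of i] by (simp add: of_rat_le_of_nat_iff)
    next
      fix i j :: nat assume "i \<noteq> j"
      then show "snd (p i) < fst (p j) \<or> snd (p j) < fst (p i)"
        using chain by (auto simp: neq_iff)
    qed simp
    then show False by simp
  qed
  then show thesis using that by blast
qed

section \<open>Segments\<close>

lemma convex_in_Union:
  assumes "\<And>T. T \<in> \<T> \<Longrightarrow> convex_in A T \<and> c \<in> T"
  shows "convex_in A (\<Union>\<T>)"
  unfolding convex_in_def
proof (intro conjI ballI impI)
  show "\<Union>\<T> \<subseteq> A" using assms unfolding convex_in_def by blast
  fix u v w assume u: "u \<in> \<Union>\<T>" and v: "v \<in> \<Union>\<T>" and w: "w \<in> A" "u \<le> w \<and> w \<le> v"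
  obtain U V where UV: "U \<in> \<T>" "u \<in> U" "V \<in> \<T>" "v \<in> V" using u v by blast
  have "w \<in> U \<or> w \<in> V"
  proof (cases "w \<le> c")
    case True
    then show ?thesis using assms[OF UV(1)] UV(2) w unfolding convex_in_def by blast
  next
    case False
    then show ?thesis using assms[OF UV(3)] UV(4) w unfolding convex_in_def by (meson linear)
  qed
  then show "w \<in> \<Union>\<T>" using UV by blast
qed

lemma segment_absorb:
  assumes P: "partition_on A P" and S: "segment A P S"
    and T: "convex_in A T" "X \<in> P" "T \<subseteq> X" and meet: "S \<inter> T \<noteq> {}"
  shows "T \<subseteq> S"
proof -
  obtain Y where Y: "Y \<in> P" "S \<subseteq> Y" using S unfolding segment_def by blast
  obtain c where c: "c \<in> S" "c \<in> T" using meet by blast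
  then have "X = Y" using partition_on_block_eq[OF P T(2) Y(1)] T(3) Y(2) by blast
  moreover have "convex_in A (S \<union> T)"
    using S T(1) c convex_in_Union[of "{S, T}" A c] unfolding segment_def by auto
  ultimately have "S \<union> T = S" using S T(3) Y unfolding segment_def by blast
  then show ?thesis by blast
qed

lemma segment_eq:
  assumes "partition_on A P" "segment A P S" "segment A P S'" "S \<inter> S' \<noteq> {}"
  shows "S = S'"
  using segment_absorb[OF assms(1,2)] segment_absorb[OF assms(1,3)] assms(2-4)
  unfolding segment_def by (metis inf_commute subset_antisym)

lemma exists_segment:
  assumes P: "partition_on A P" and x: "x \<in> A"
  obtains S where "segment A P S" "x \<in> S"
proof -
  obtain X where X: "X \<in> P" "x \<in> X" using P x unfolding partition_on_def by blast
  define S where "S = \<Union>{T. convex_in A T \<and> T \<subseteq> X \<and> x \<in> T}"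
  have "convex_in A {x}" using x unfolding convex_in_def by auto
  then have xS: "x \<in> S" using X unfolding S_def by blast
  have "convex_in A S" unfolding S_def by (rule convex_in_Union) blast
  moreover have "T = S" if "convex_in A T" "Y \<in> P" "T \<subseteq> Y" "S \<subseteq> T" for T Y
  proof -
    have "Y = X" using partition_on_block_eq[OF P that(2) X(1)] that(3,4) xS X(2) by blast
    then show ?thesis using that xS unfolding S_def by blast
  qed
  ultimately have "segment A P S"
    using xS X unfolding segment_def S_def by blast
  with xS show thesis using that by blast
qed

definition right_locally_constant :: "real set set \<Rightarrow> bool" where
  "right_locally_constant P \<longleftrightarrow> (\<forall>x\<in>Rplus. \<exists>\<epsilon>>0. \<exists>X\<in>P. {x..<x+\<epsilon>} \<subseteq> X)"

lemma convex_in_Rplus_iff: "convex_in Rplus S \<longleftrightarrow> S \<subseteq> Rplus \<and> (\<forall>x\<in>S. \<forall>y\<in>S. {x..y} \<subseteq> S)"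
proof
  assume S: "convex_in Rplus S"
  have Rplus: "S \<subseteq> Rplus" using S by (simp add: convex_in_def)
  moreover have "{x..y} \<subseteq> S" if "x \<in> S" "y \<in> S" for x y
  proof
    fix w assume w: "w \<in> {x..y}"
    have "0 \<le> x" using Rplus that(1) unfolding Rplus_def by blast
    then have "w \<in> Rplus" using w unfolding Rplus_def by simp
    with that w S show "w \<in> S" unfolding convex_in_def by (meson atLeastAtMost_iff)
  qed
  ultimately show "S \<subseteq> Rplus \<and> (\<forall>x\<in>S. \<forall>y\<in>S. {x..y} \<subseteq> S)" by blast
next
  assume S: "S \<subseteq> Rplus \<and> (\<forall>x\<in>S. \<forall>y\<in>S. {x..y} \<subseteq> S)"
  show "convex_in Rplus S"
    unfolding convex_in_def
  proof (intro conjI ballI impI)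
    fix x y w assume "x \<in> S" "y \<in> S" "x \<le> w \<and> w \<le> y"
    then show "w \<in> S" using S by (meson atLeastAtMost_iff subsetD)
  qed (use S in blast)
qed

lemma convex_in_Rplus_Ico: "0 \<le> a \<Longrightarrow> convex_in Rplus {a..<b}"
  unfolding convex_in_Rplus_iff unfolding Rplus_def by (auto simp: subset_iff)

lemma convex_in_Rplus_Ioc: "0 \<le> a \<Longrightarrow> convex_in Rplus {a<..b}"
  unfolding convex_in_Rplus_iff unfolding Rplus_def by (auto simp: subset_iff)

lemma segment_Inf:
  assumes P: "partition_on Rplus P" and rlc: "right_locally_constant P" and S: "segment Rplus P S"
  shows "Inf S \<in> S" "\<And>s. s \<in> S \<Longrightarrow> Inf S \<le> s"
proof -
  have S_Rplus: "S \<subseteq> Rplus" and "S \<noteq> {}" using S unfolding segment_def convex_in_def by auto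
  moreover have bdd: "bdd_below S" using S_Rplus unfolding Rplus_def bdd_below_def by auto
  ultimately show Inf_le: "Inf S \<le> s" if "s \<in> S" for s using that by (simp add: cInf_lower)
  have a: "0 \<le> Inf S" using S_Rplus \<open>S \<noteq> {}\<close> unfolding Rplus_def by (intro cInf_greatest) auto
  then obtain \<epsilon> Y where \<epsilon>: "\<epsilon> > 0" "Y \<in> P" "{Inf S..<Inf S + \<epsilon>} \<subseteq> Y"
    using rlc unfolding right_locally_constant_def Rplus_def by auto
  obtain s where "s \<in> S" "s < Inf S + \<epsilon>"
    using cInf_less_iff[OF \<open>S \<noteq> {}\<close> bdd, of "Inf S + \<epsilon>"] \<epsilon>(1) by auto
  with Inf_le have "S \<inter> {Inf S..<Inf S + \<epsilon>} \<noteq> {}" by fastforce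
  then have "{Inf S..<Inf S + \<epsilon>} \<subseteq> S"
    using \<epsilon> by (intro segment_absorb[OF P S convex_in_Rplus_Ico[OF a]])
  then show "Inf S \<in> S" using \<epsilon>(1) by auto
qed

lemma segment_Sup_not_mem:
  assumes P: "partition_on Rplus P" and rlc: "right_locally_constant P" and S: "segment Rplus P S"
    and bdd: "bdd_above S"
  shows "Sup S \<notin> S"
proof
  assume b: "Sup S \<in> S"
  then have "Sup S \<in> Rplus" using S unfolding segment_def convex_in_def by auto
  then obtain \<epsilon> Y where \<epsilon>: "\<epsilon> > 0" "Y \<in> P" "{Sup S..<Sup S + \<epsilon>} \<subseteq> Y"
    using rlc unfolding right_locally_constant_def by blast
  have "{Sup S..<Sup S + \<epsilon>} \<subseteq> S"
    using b \<epsilon> \<open>Sup S \<in> Rplus\<close> unfolding Rplus_def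
    by (intro segment_absorb[OF P S convex_in_Rplus_Ico]) auto
  then have "Sup S + \<epsilon> / 2 \<in> S" using \<epsilon>(1) by auto
  then show False using cSup_upper[OF _ bdd] \<epsilon>(1) by fastforce
qed

lemma segment_eq_interval:
  assumes P: "partition_on Rplus P" and rlc: "right_locally_constant P" and S: "segment Rplus P S"
  shows "(\<exists>a b. a < b \<and> S = {a..<b}) \<or> (\<exists>a. S = {a..})"
proof -
  let ?a = "Inf S"
  have a: "?a \<in> S" "\<And>s. s \<in> S \<Longrightarrow> ?a \<le> s" using segment_Inf[OF assms] by auto
  have convex: "y \<in> S" if "?a \<le> y" "y \<le> s" "s \<in> S" for y s
  proof -
    have "convex_in Rplus S" using S unfolding segment_def by blast
    then have "{?a..s} \<subseteq> S" using a(1) that(3) unfolding convex_in_Rplus_iff by blast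
    then show ?thesis using that(1,2) by (meson atLeastAtMost_iff subsetD)
  qed
  show ?thesis
  proof (cases "bdd_above S")
    case True
    let ?b = "Sup S"
    have b: "?b \<notin> S" by (rule segment_Sup_not_mem[OF assms True])
    have le_b: "s \<le> ?b" if "s \<in> S" for s using cSup_upper[OF that True] .
    have "S = {?a..<?b}"
    proof (intro subset_antisym subsetI)
      fix s assume "s \<in> S"
      then show "s \<in> {?a..<?b}"
        using a(2) le_b b by (metis atLeastLessThan_iff order.not_eq_order_implies_strict)
    next
      fix y assume y: "y \<in> {?a..<?b}"
      then obtain s where "s \<in> S" "y < s"
        using less_cSup_iff[OF _ True] a(1) by (metis atLeastLessThan_iff empty_iff)
      then show "y \<in> S" using convex y by (meson atLeastLessThan_iff less_imp_le)
    qed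
    moreover have "?a < ?b" using a(1) b le_b[OF a(1)] by (metis order.not_eq_order_implies_strict)
    ultimately show ?thesis by blast
  next
    case False
    have "S = {?a..}"
    proof (intro subset_antisym subsetI)
      fix s assume "s \<in> S"
      then show "s \<in> {?a..}" using a(2) by simp
    next
      fix y assume "y \<in> {?a..}"
      moreover obtain s where "s \<in> S" "y < s" using False unfolding bdd_above_def by (meson not_le)
      ultimately show "y \<in> S" using convex by (meson atLeast_iff less_imp_le)
    qed
    then show ?thesis by blast
  qed
qed

lemma right_cont_R_if_right_locally_constant:
  "partition_on Rplus P \<Longrightarrow> right_locally_constant P \<Longrightarrow> right_cont_R P"
  unfolding right_cont_R_def using segment_eq_interval by blast

lemma right_locally_constant_if_Ploc:
  assumes "P \<in> Ploc_set"
  shows "right_locally_constant P"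
  unfolding right_locally_constant_def
proof
  fix x assume x: "x \<in> Rplus"
  have P: "partition_on Rplus P" and rc: "right_cont_R P"
    using assms by (auto simp: Ploc_set_def mem_Parts_iff)
  obtain S where S: "segment Rplus P S" "x \<in> S" using exists_segment[OF P x] by blast
  then obtain X where X: "X \<in> P" "S \<subseteq> X" unfolding segment_def by blast
  from rc S(1) consider a b where "S = {a..<b}" | a where "S = {a..}"
    unfolding right_cont_R_def by blast
  then have "\<exists>\<epsilon>>0. {x..<x+\<epsilon>} \<subseteq> S"
  proof cases
    case (1 a b)
    then show ?thesis using S(2) by (intro exI[of _ "b - x"]) auto
  next
    case (2 a)
    then show ?thesis using S(2) by (intro exI[of _ 1]) auto
  qed
  then show "\<exists>\<epsilon>>0. \<exists>X\<in>P. {x..<x+\<epsilon>} \<subseteq> X" using X by blast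
qed

section \<open>Lifting a partition of the rationals to the half-line\<close>

lemma finite_set_separation:
  fixes A :: "real set"
  assumes "finite A"
  obtains \<delta> where "0 < \<delta>" "\<delta> \<le> 1" "\<And>a b. a \<in> A \<Longrightarrow> b \<in> A \<Longrightarrow> a \<noteq> b \<Longrightarrow> \<delta> \<le> \<bar>a - b\<bar>"
proof
  let ?D = "insert 1 ((\<lambda>(a, b). \<bar>a - b\<bar>) ` {(a, b) \<in> A \<times> A. a \<noteq> b})"
  have "{(a, b) \<in> A \<times> A. a \<noteq> b} \<subseteq> A \<times> A" by auto
  then have "finite ?D" using assms by (simp add: finite_subset)
  then show "0 < Min ?D" "Min ?D \<le> 1" by auto
  show "Min ?D \<le> \<bar>a - b\<bar>" if "a \<in> A" "b \<in> A" "a \<noteq> b" for a b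
    using \<open>finite ?D\<close> that by (intro Min_le) auto
qed

definition lift_block :: "rat set set \<Rightarrow> rat set \<Rightarrow> real set" where
  "lift_block P B = {x \<in> Rplus. right_germ P x B}"

definition lift :: "rat set set \<Rightarrow> real set set" where
  "lift P = lift_block P ` P"

context
  fixes P :: "rat set set"
  assumes good: "good_partition P"
begin

lemma good_partition_on: "partition_on Qplus P"
  using good unfolding good_partition_def by blast

lemma vimage_lift_block:
  assumes B: "B \<in> P"
  shows "real_of_rat -` lift_block P B \<inter> Qplus = B"
proof (intro subset_antisym subsetI)
  fix q assume "q \<in> real_of_rat -` lift_block P B \<inter> Qplus"
  then show "q \<in> B" unfolding lift_block_def using right_germ_of_rat_mem by blast
next
  fix q assume q: "q \<in> B"
  then have "q \<in> Qplus" using good_partition_on B unfolding partition_on_def by blast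
  moreover have "right_germ P (real_of_rat q) B"
    using good q B unfolding good_partition_def by (intro right_germ_of_rat) auto
  ultimately show "q \<in> real_of_rat -` lift_block P B \<inter> Qplus"
    unfolding lift_block_def Rplus_def Qplus_def by simp
qed

lemma partition_on_lift: "partition_on Rplus (lift P)"
proof (rule partition_onI)
  show "\<Union>(lift P) = Rplus"
  proof (intro subset_antisym subsetI)
    fix x assume "x \<in> Rplus"
    moreover obtain B where "right_germ P x B"
      using exists_right_germ[OF good] \<open>x \<in> Rplus\<close> unfolding Rplus_def by blast
    ultimately show "x \<in> \<Union>(lift P)" unfolding lift_def lift_block_def right_germ_def by blast
  qed (auto simp: lift_def lift_block_def)
  show "disjnt X Y" if "X \<in> lift P" "Y \<in> lift P" "X \<noteq> Y" for X Y
    using that right_germ_unique[OF good_partition_on]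
    unfolding lift_def lift_block_def disjnt_def Rplus_def by blast
  show "{} \<notin> lift P"
    using vimage_lift_block good_partition_on unfolding lift_def partition_on_def by force
qed

lemma Rest_Q_lift: "Rest_Q (lift P) = P"
proof -
  have "Rest_Q (lift P) = (\<lambda>B. real_of_rat -` lift_block P B \<inter> Qplus) ` P - {{}}"
    unfolding Rest_Q_def lift_def by (simp add: image_image)
  also have "\<dots> = P - {{}}" using vimage_lift_block by simp
  also have "\<dots> = P" using good_partition_on unfolding partition_on_def by blast
  finally show ?thesis .
qed

lemma right_locally_constant_lift: "right_locally_constant (lift P)"
  unfolding right_locally_constant_def
proof
  fix x assume x: "x \<in> Rplus"
  then obtain B where B: "right_germ P x B"
    using exists_right_germ[OF good] unfolding Rplus_def by blast
  then obtain \<epsilon> where "\<epsilon> > 0" and \<epsilon>: "\<And>y. x \<le> y \<Longrightarrow> y < x + \<epsilon> \<Longrightarrow> right_germ P y B"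
    by (rule right_germ_right_nbhd) blast
  have "{x..<x+\<epsilon>} \<subseteq> lift_block P B"
    using x \<epsilon> unfolding lift_block_def Rplus_def by auto
  moreover have "lift_block P B \<in> lift P" using B unfolding lift_def right_germ_def by blast
  ultimately show "\<exists>\<epsilon>>0. \<exists>X\<in>lift P. {x..<x+\<epsilon>} \<subseteq> X" using \<open>\<epsilon> > 0\<close> by blast
qed

lemma exists_non_germ_left_of_segment:
  assumes S: "segment Rplus (lift P) S" and a: "a = Inf S" and B: "right_germ P a B"
    and \<delta>: "0 < \<delta>" "\<delta> \<le> a"
  obtains y where "a - \<delta> < y" "y < a" "\<not> right_germ P y B"
proof -
  have P: "partition_on Rplus (lift P)" by (rule partition_on_lift)
  have aS: "a \<in> S" "\<And>s. s \<in> S \<Longrightarrow> a \<le> s"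
    using segment_Inf[OF P right_locally_constant_lift S] a by auto
  obtain X where X: "X \<in> lift P" "S \<subseteq> X" using S unfolding segment_def by blast
  then obtain C where C: "C \<in> P" "X = lift_block P C" unfolding lift_def by blast
  have "a \<in> Rplus" using \<delta> by (simp add: Rplus_def)
  then have "B = C"
    using aS(1) X(2) C(2) B right_germ_unique[OF good_partition_on]
    unfolding lift_block_def Rplus_def by blast
  have "\<exists>y. a - \<delta> < y \<and> y < a \<and> \<not> right_germ P y B"
  proof (rule ccontr)
    assume "\<nexists>y. a - \<delta> < y \<and> y < a \<and> \<not> right_germ P y B"
    then have germ: "right_germ P y B" if "a - \<delta> < y" "y < a" for y using that by blast
    have "{a - \<delta><..a} \<subseteq> X"
      using germ B \<delta> unfolding C(2) \<open>B = C\<close>[symmetric] lift_block_def Rplus_def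
      by (auto simp: order.order_iff_strict)
    then have "{a - \<delta><..a} \<subseteq> S"
      using \<delta> aS(1) X(1) by (intro segment_absorb[OF P S convex_in_Rplus_Ioc]) auto
    then have "a - \<delta> / 2 \<in> S" using \<delta>(1) by auto
    then show False using aS(2) \<delta>(1) by fastforce
  qed
  then show thesis using that by blast
qed

lemma separated_pair_across_germ_change:
  assumes y: "0 \<le> y" "y < a" and C: "right_germ P y C" and B: "right_germ P a B" "B \<noteq> C"
    and "0 < d"
  obtains r s where "y < real_of_rat r" "real_of_rat r < a" "a < real_of_rat s"
    "real_of_rat s < a + d" "\<not> same_block P r s"
proof -
  obtain \<epsilon>C where \<epsilon>C: "\<epsilon>C > 0" "\<And>q. y \<le> real_of_rat q \<Longrightarrow> real_of_rat q < y + \<epsilon>C \<Longrightarrow> q \<in> C"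
    using C unfolding right_germ_def by blast
  obtain \<epsilon>B where \<epsilon>B: "\<epsilon>B > 0" "\<And>q. a \<le> real_of_rat q \<Longrightarrow> real_of_rat q < a + \<epsilon>B \<Longrightarrow> q \<in> B"
    using B unfolding right_germ_def by blast
  have "y < min (y + \<epsilon>C) a" using \<epsilon>C(1) y(2) by simp
  then obtain r where r: "r \<in> Qplus" "y < real_of_rat r" "real_of_rat r < min (y + \<epsilon>C) a"
    by (rule exists_rat_between[OF y(1)])
  have "a < min (a + \<epsilon>B) (a + d)" "0 \<le> a" using \<epsilon>B(1) \<open>0 < d\<close> y by simp_all
  then obtain s where s: "s \<in> Qplus" "a < real_of_rat s" "real_of_rat s < min (a + \<epsilon>B) (a + d)"
    using exists_rat_between by blast
  have "r \<in> C" "s \<in> B" using r s \<epsilon>C(2) \<epsilon>B(2) by auto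
  have "C \<in> P" "B \<in> P" using B C unfolding right_germ_def by blast+
  then have "s \<notin> C"
    using partition_on_block_eq[OF good_partition_on] \<open>s \<in> B\<close> \<open>B \<noteq> C\<close> by blast
  then have "\<not> same_block P r s"
    using same_block_iff_mem[OF good_partition_on \<open>C \<in> P\<close> \<open>r \<in> C\<close>] by blast
  with r s show thesis using that by simp
qed

lemma separated_pair_around_segment_start:
  assumes S: "segment Rplus (lift P) S" and a: "a = Inf S" "0 < a" and "0 < \<delta>"
  obtains r s where "0 \<le> r" "a - \<delta> < real_of_rat r" "real_of_rat r < a" "a < real_of_rat s"
    "real_of_rat s < a + \<delta>" "\<not> same_block P r s"
proof -
  define d where "d = min \<delta> a"
  have d: "0 < d" "d \<le> a" "d \<le> \<delta>" using a \<open>0 < \<delta>\<close> by (auto simp: d_def)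
  obtain B where B: "right_germ P a B"
    using exists_right_germ[OF good less_imp_le[OF a(2)]] by blast
  obtain y where y: "a - d < y" "y < a" "\<not> right_germ P y B"
    using exists_non_germ_left_of_segment[OF S a(1) B d(1,2)] by blast
  have "0 \<le> y" using y d by linarith
  then obtain C where C: "right_germ P y C" using exists_right_germ[OF good] by blast
  with y(3) have "B \<noteq> C" by blast
  obtain r s where rs: "y < real_of_rat r" "real_of_rat r < a" "a < real_of_rat s"
    "real_of_rat s < a + d" "\<not> same_block P r s"
    using separated_pair_across_germ_change[OF \<open>0 \<le> y\<close> y(2) C B \<open>B \<noteq> C\<close> d(1)] by blast
  have "0 \<le> real_of_rat r" using rs(1) \<open>0 \<le> y\<close> by linarith
  then have "0 \<le> r" by simp
  moreover have "a - \<delta> < real_of_rat r" "real_of_rat s < a + \<delta>" using rs y d by linarith+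
  ultimately show thesis using that rs by blast
qed

lemma separated_pairs_at_segment_starts:
  assumes A: "finite A" "A \<subseteq> {a. 0 < a \<and> a \<le> t \<and> (\<exists>S. segment Rplus (lift P) S \<and> a = Inf S)}"
  obtains r s :: "real \<Rightarrow> rat"
  where "\<And>a. a \<in> A \<Longrightarrow> 0 \<le> r a \<and> r a < s a \<and> real_of_rat (s a) \<le> t + 1 \<and> \<not> same_block P (r a) (s a)"
    and "\<And>a b. a \<in> A \<Longrightarrow> b \<in> A \<Longrightarrow> a \<noteq> b \<Longrightarrow> s a < r b \<or> s b < r a"
proof -
  obtain \<delta> where \<delta>: "0 < \<delta>" "\<delta> \<le> 1" and sep: "\<And>a b. a \<in> A \<Longrightarrow> b \<in> A \<Longrightarrow> a \<noteq> b \<Longrightarrow> \<delta> \<le> \<bar>a - b\<bar>"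
    using finite_set_separation[OF A(1)] by blast
  let ?pair = "\<lambda>a p. 0 \<le> fst p \<and> real_of_rat (fst p) < a \<and> a < real_of_rat (snd p)
    \<and> real_of_rat (snd p) < a + \<delta> / 2 \<and> a - \<delta> / 2 < real_of_rat (fst p)
    \<and> \<not> same_block P (fst p) (snd p)"
  have "\<forall>a\<in>A. \<exists>p. ?pair a p"
  proof
    fix a assume "a \<in> A"
    then obtain S where "segment Rplus (lift P) S" "a = Inf S" "0 < a" using A(2) by blast
    moreover have "0 < \<delta> / 2" using \<delta>(1) by simp
    ultimately obtain r s where "0 \<le> r" "a - \<delta> / 2 < real_of_rat r" "real_of_rat r < a"
      "a < real_of_rat s" "real_of_rat s < a + \<delta> / 2" "\<not> same_block P r s"
      by (rule separated_pair_around_segment_start)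
    then show "\<exists>p. ?pair a p" by (intro exI[of _ "(r, s)"]) simp
  qed
  then obtain p where p: "\<And>a. a \<in> A \<Longrightarrow> ?pair a (p a)" using bchoice[of A ?pair] by blast
  show thesis
  proof (rule that[of "\<lambda>a. fst (p a)" "\<lambda>a. snd (p a)"])
    fix a assume a: "a \<in> A"
    then have "a \<le> t" using A(2) by blast
    then have "real_of_rat (fst (p a)) < real_of_rat (snd (p a))" "real_of_rat (snd (p a)) \<le> t + 1"
      using p[OF a] \<delta> by linarith+
    then show "0 \<le> fst (p a) \<and> fst (p a) < snd (p a) \<and> real_of_rat (snd (p a)) \<le> t + 1
        \<and> \<not> same_block P (fst (p a)) (snd (p a))"
      using p[OF a] by (simp add: of_rat_less)
  next
    fix a b assume ab: "a \<in> A" "b \<in> A" "a \<noteq> b"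
    have "real_of_rat (snd (p a)) < real_of_rat (fst (p b))
        \<or> real_of_rat (snd (p b)) < real_of_rat (fst (p a))"
      using p[OF ab(1)] p[OF ab(2)] sep[OF ab] by linarith
    then show "snd (p a) < fst (p b) \<or> snd (p b) < fst (p a)" by (simp add: of_rat_less)
  qed
qed

lemma finite_segment_starts:
  "finite {a. 0 < a \<and> a \<le> t \<and> (\<exists>S. segment Rplus (lift P) S \<and> a = Inf S)}"
    (is "finite ?M")
proof -
  obtain n :: nat where n: "t + 1 \<le> real n" using real_arch_simple by blast
  have "bounded_changes P" using good unfolding good_partition_def by blast
  then obtain K where K: "\<And>(I :: real set) r s. finite I \<Longrightarrow>
      (\<And>i. i \<in> I \<Longrightarrow> 0 \<le> r i \<and> r i < s i \<and> s i \<le> of_nat n \<and> \<not> same_block P (r i) (s i)) \<Longrightarrow>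
      (\<And>i j. i \<in> I \<Longrightarrow> j \<in> I \<Longrightarrow> i \<noteq> j \<Longrightarrow> s i < r j \<or> s j < r i) \<Longrightarrow> card I \<le> K"
    by (rule card_separated_pairs_le) blast
  have bound: "card A \<le> K" if A: "finite A" "A \<subseteq> ?M" for A
  proof -
    obtain r s :: "real \<Rightarrow> rat"
      where pair: "\<And>a. a \<in> A \<Longrightarrow>
          0 \<le> r a \<and> r a < s a \<and> real_of_rat (s a) \<le> t + 1 \<and> \<not> same_block P (r a) (s a)"
        and disjoint: "\<And>a b. a \<in> A \<Longrightarrow> b \<in> A \<Longrightarrow> a \<noteq> b \<Longrightarrow> s a < r b \<or> s b < r a"
      using separated_pairs_at_segment_starts[OF A] by blast
    show ?thesis
    proof (rule K[OF A(1), of r s])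
      fix a assume a: "a \<in> A"
      then have "real_of_rat (s a) \<le> real n" using pair[OF a] n by linarith
      then show "0 \<le> r a \<and> r a < s a \<and> s a \<le> of_nat n \<and> \<not> same_block P (r a) (s a)"
        using pair[OF a] by (simp add: of_rat_le_of_nat_iff)
    qed (rule disjoint)
  qed
  show ?thesis
  proof (rule ccontr)
    assume "infinite ?M"
    then obtain A where "finite A" "card A = Suc K" "A \<subseteq> ?M"
      using infinite_arbitrarily_large by blast
    then show False using bound by fastforce
  qed
qed

lemma loc_finite_R_lift: "loc_finite_R (lift P)"
  unfolding loc_finite_R_def
proof
  fix t :: real
  let ?Seg = "{S. segment Rplus (lift P) S \<and> S \<inter> {0..t} \<noteq> {}}"
  let ?M = "{a. 0 < a \<and> a \<le> t \<and> (\<exists>S. segment Rplus (lift P) S \<and> a = Inf S)}"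
  have P: "partition_on Rplus (lift P)" by (rule partition_on_lift)
  note Inf = segment_Inf[OF P right_locally_constant_lift]
  have "inj_on Inf ?Seg"
  proof (rule inj_onI)
    fix S S' assume S: "S \<in> ?Seg" and S': "S' \<in> ?Seg" and eq: "Inf S = Inf S'"
    have "segment Rplus (lift P) S" "segment Rplus (lift P) S'" using S S' by auto
    then have "Inf S \<in> S" "Inf S' \<in> S'" using Inf(1) by blast+
    then have "Inf S \<in> S \<inter> S'" using eq by simp
    then show "S = S'" using segment_eq[OF P] S S' by blast
  qed
  moreover have "Inf ` ?Seg \<subseteq> insert 0 ?M"
  proof
    fix a assume "a \<in> Inf ` ?Seg"
    then obtain S x where S: "segment Rplus (lift P) S" "a = Inf S" "x \<in> S" "x \<in> {0..t}" by blast
    have "a \<in> Rplus" using Inf(1)[OF S(1)] S(1,2) unfolding segment_def convex_in_def by blast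
    then have "0 \<le> a" by (simp add: Rplus_def)
    moreover have "a \<le> t" using Inf(2)[OF S(1,3)] S(2,4) by simp
    ultimately show "a \<in> insert 0 ?M" using S(1,2) by (cases "a = 0") auto
  qed
  then have "finite (Inf ` ?Seg)" using finite_segment_starts finite_subset by blast
  ultimately show "finite ?Seg" using finite_imageD by blast
qed

lemma lift_in_Ploc: "lift P \<in> Ploc_set"
  unfolding Ploc_set_def
  using partition_on_lift right_locally_constant_lift loc_finite_R_lift
    right_cont_R_if_right_locally_constant
  by (simp add: mem_Parts_iff)

end

section \<open>Measurability and uniqueness\<close>

lemma partition_on_Rest_Q:
  assumes P: "partition_on Rplus P"
  shows "partition_on Qplus (Rest_Q P)"
proof -
  have "real_of_rat -` Rplus = Qplus" unfolding Rplus_def Qplus_def by auto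
  moreover have "real_of_rat -` B \<inter> Qplus = real_of_rat -` B" if "B \<in> P" for B
    using that P calculation unfolding partition_on_def by blast
  then have "Rest_Q P = (-`) real_of_rat ` P - {{}}" unfolding Rest_Q_def by simp
  ultimately show ?thesis using partition_on_vimage[OF P, of real_of_rat] by simp
qed

lemma same_block_Rest_Q:
  assumes "q \<in> Qplus" "q' \<in> Qplus"
  shows "same_block (Rest_Q P) q q' \<longleftrightarrow> same_block P (real_of_rat q) (real_of_rat q')"
proof
  assume "same_block P (real_of_rat q) (real_of_rat q')"
  then obtain B where "B \<in> P" "real_of_rat q \<in> B" "real_of_rat q' \<in> B" unfolding same_block_def
    by blast
  then show "same_block (Rest_Q P) q q'"
    unfolding same_block_def Rest_Q_def
      using assms by (intro bexI[of _ "real_of_rat -` B \<inter> Qplus"]) auto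
qed (auto simp: same_block_def Rest_Q_def)

lemma Ploc_set_subset: "Ploc_set \<subseteq> Parts Rplus"
  unfolding Ploc_set_def by blast

lemma measurable_Rest_Q: "Rest_Q \<in> measurable P_loc P_Q"
  unfolding P_Q_def
proof (rule measurable_part_measureI)
  show "Rest_Q \<in> space P_loc \<rightarrow> Parts Qplus"
    using Ploc_set_subset partition_on_Rest_Q
      by (auto simp: P_loc_def space_part_measure mem_Parts_iff)
  fix q q' assume "q \<in> Qplus" "q' \<in> Qplus"
  then have "Measurable.pred P_loc (\<lambda>P. same_block (Rest_Q P) q q') \<longleftrightarrow>
      Measurable.pred P_loc (\<lambda>P. same_block P (real_of_rat q) (real_of_rat q'))"
    by (intro measurable_cong) (simp add: same_block_Rest_Q)
  then show "Measurable.pred P_loc (\<lambda>P. same_block (Rest_Q P) q q')"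
    unfolding P_loc_def using pred_same_block[OF Ploc_set_subset] by simp
qed simp

text \<open>The radius \<open>1 / (m + 1)\<close> makes the quantification countable, so that \<open>same_germ\<close>
  is measurable on \<open>P_Q\<close>.\<close>

definition same_germ :: "rat set set \<Rightarrow> real \<Rightarrow> real \<Rightarrow> bool" where
  "same_germ P x y \<longleftrightarrow> (\<exists>m::nat. \<forall>q q'.
     x \<le> real_of_rat q \<and> real_of_rat q < x + inverse (real (Suc m)) \<and>
     y \<le> real_of_rat q' \<and> real_of_rat q' < y + inverse (real (Suc m)) \<longrightarrow> same_block P q q')"

lemma same_germ_Rest_Q_if_same_block:
  assumes P: "partition_on Rplus P" and rlc: "right_locally_constant P"
    and x: "x \<in> Rplus" and y: "y \<in> Rplus" and same: "same_block P x y"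
  shows "same_germ (Rest_Q P) x y"
proof -
  obtain X where X: "X \<in> P" "x \<in> X" "y \<in> X" using same unfolding same_block_def by blast
  obtain \<epsilon> X' where \<epsilon>: "\<epsilon> > 0" "X' \<in> P" "{x..<x+\<epsilon>} \<subseteq> X'"
    using rlc x unfolding right_locally_constant_def by blast
  obtain \<delta> Y where \<delta>: "\<delta> > 0" "Y \<in> P" "{y..<y+\<delta>} \<subseteq> Y"
    using rlc y unfolding right_locally_constant_def by blast
  have "x \<in> X'" "y \<in> Y" using \<epsilon> \<delta> by auto
  then have "X' = X" "Y = X"
    using partition_on_block_eq[OF P \<epsilon>(2) X(1)] partition_on_block_eq[OF P \<delta>(2) X(1)] X(2,3) by auto
  obtain m :: nat where m: "inverse (real (Suc m)) < min \<epsilon> \<delta>"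
    using reals_Archimedean[of "min \<epsilon> \<delta>"] \<epsilon>(1) \<delta>(1) by auto
  show ?thesis
    unfolding same_germ_def
  proof (intro exI[of _ m] allI impI)
    fix q q' assume qq': "x \<le> real_of_rat q \<and> real_of_rat q < x + inverse (real (Suc m)) \<and>
        y \<le> real_of_rat q' \<and> real_of_rat q' < y + inverse (real (Suc m))"
    then have "real_of_rat q \<in> X" "real_of_rat q' \<in> X"
      using m \<epsilon>(3) \<delta>(3) \<open>X' = X\<close> \<open>Y = X\<close> by auto
    then have "same_block P (real_of_rat q) (real_of_rat q')" unfolding same_block_def
      using X(1) by blast
    moreover have "q \<in> Qplus" "q' \<in> Qplus" using qq' x y mem_QplusI by (auto simp: Rplus_def)
    ultimately show "same_block (Rest_Q P) q q'" by (simp add: same_block_Rest_Q)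
  qed
qed

lemma same_block_if_same_germ_Rest_Q:
  assumes P: "partition_on Rplus P" and rlc: "right_locally_constant P"
    and x: "x \<in> Rplus" and y: "y \<in> Rplus" and germ: "same_germ (Rest_Q P) x y"
  shows "same_block P x y"
proof -
  obtain \<epsilon> X where \<epsilon>: "\<epsilon> > 0" "X \<in> P" "{x..<x+\<epsilon>} \<subseteq> X"
    using rlc x unfolding right_locally_constant_def by blast
  obtain \<delta> Y where \<delta>: "\<delta> > 0" "Y \<in> P" "{y..<y+\<delta>} \<subseteq> Y"
    using rlc y unfolding right_locally_constant_def by blast
  obtain m :: nat where m: "\<And>q q'. x \<le> real_of_rat q \<Longrightarrow> real_of_rat q < x + inverse (real (Suc m)) \<Longrightarrow>
      y \<le> real_of_rat q' \<Longrightarrow> real_of_rat q' < y + inverse (real (Suc m)) \<Longrightarrow> same_block (Rest_Q P) q q'"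
    using germ unfolding same_germ_def by blast
  have x0: "0 \<le> x" and y0: "0 \<le> y" using x y by (simp_all add: Rplus_def)
  have "x < x + min \<epsilon> (inverse (real (Suc m)))" "y < y + min \<delta> (inverse (real (Suc m)))"
    using \<epsilon>(1) \<delta>(1) by simp_all
  then obtain q q'
    where q: "q \<in> Qplus" "x < real_of_rat q" "real_of_rat q < x + min \<epsilon> (inverse (real (Suc m)))"
    and q': "q' \<in> Qplus" "y < real_of_rat q'" "real_of_rat q' < y + min \<delta> (inverse (real (Suc m)))"
    using exists_rat_between[OF x0] exists_rat_between[OF y0] by metis
  then have "same_block (Rest_Q P) q q'" by (intro m) auto
  then have "same_block P (real_of_rat q) (real_of_rat q')"
    using q(1) q'(1) by (simp add: same_block_Rest_Q)
  moreover have "real_of_rat q \<in> X" "real_of_rat q' \<in> Y" using q q' \<epsilon>(3) \<delta>(3) by auto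
  ultimately have "X = Y"
    using same_block_iff_mem[OF P \<epsilon>(2)] partition_on_block_eq[OF P \<epsilon>(2) \<delta>(2)] by blast
  moreover have "x \<in> X" "y \<in> Y" using \<epsilon> \<delta> by auto
  ultimately show ?thesis unfolding same_block_def using \<epsilon>(2) by blast
qed

lemma same_block_iff_same_germ:
  assumes "partition_on Rplus P" "right_locally_constant P" "x \<in> Rplus" "y \<in> Rplus"
  shows "same_block P x y \<longleftrightarrow> same_germ (Rest_Q P) x y"
  using same_germ_Rest_Q_if_same_block[OF assms] same_block_if_same_germ_Rest_Q[OF assms] by blast

lemma pred_same_germ: "Measurable.pred P_Q (\<lambda>P. same_germ P x y)"
proof -
  have "Measurable.pred P_Q (\<lambda>P. same_block P q q')" for q q' :: rat
    unfolding P_Q_def by (rule pred_same_block) simp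
  then show ?thesis
    unfolding same_germ_def by (intro pred_intros_countable pred_intros_logic measurable_const) auto
qed

lemma Rest_Q_funcset: "Rest_Q \<in> Ploc_set \<rightarrow> space P_Q"
  using Ploc_set_subset partition_on_Rest_Q by (auto simp: P_Q_def space_part_measure mem_Parts_iff)

lemma sets_P_loc_subset_vimage: "sets P_loc \<subseteq> sets (vimage_algebra Ploc_set Rest_Q P_Q)"
proof -
  let ?V = "vimage_algebra Ploc_set Rest_Q P_Q"
  have "(\<lambda>P. P) \<in> measurable ?V P_loc"
    unfolding P_loc_def
  proof (rule measurable_part_measureI[OF _ Ploc_set_subset])
    show "(\<lambda>P. P) \<in> space ?V \<rightarrow> Ploc_set" by simp
    fix x y assume xy: "x \<in> Rplus" "y \<in> Rplus"
    have "Measurable.pred ?V (\<lambda>P. same_germ (Rest_Q P) x y)"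
      using measurable_compose[OF measurable_vimage_algebra1[OF Rest_Q_funcset] pred_same_germ] .
    moreover have "same_germ (Rest_Q P) x y \<longleftrightarrow> same_block P x y" if "P \<in> space ?V" for P
      using that xy same_block_iff_same_germ[of P x y] right_locally_constant_if_Ploc[of P]
        Ploc_set_subset
      by (auto simp: mem_Parts_iff)
    ultimately show "Measurable.pred ?V (\<lambda>P. same_block P x y)"
      by (subst measurable_cong[symmetric]) auto
  qed
  then show ?thesis
    using measurable_sets[of "\<lambda>P. P" ?V P_loc] sets.sets_into_space[of _ P_loc]
    by (auto simp: P_loc_def space_part_measure Int_absorb2)
qed

lemma P_loc_measure_eqI:
  assumes sets1: "sets \<mu>1 = sets P_loc" and sets2: "sets \<mu>2 = sets P_loc"
    and distr_eq: "distr \<mu>1 P_Q Rest_Q = distr \<mu>2 P_Q Rest_Q"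
  shows "\<mu>1 = \<mu>2"
proof (rule measure_eqI)
  show "sets \<mu>1 = sets \<mu>2" using sets1 sets2 by simp
  fix A assume "A \<in> sets \<mu>1"
  then have "A \<in> sets (vimage_algebra Ploc_set Rest_Q P_Q)"
    using sets1 sets_P_loc_subset_vimage by blast
  then obtain B where B: "B \<in> sets P_Q" "A = Rest_Q -` B \<inter> Ploc_set"
    unfolding sets_vimage_algebra2[OF Rest_Q_funcset] by blast
  have "emeasure \<mu> A = emeasure (distr \<mu> P_Q Rest_Q) B" if "sets \<mu> = sets P_loc" for \<mu>
  proof -
    have "space \<mu> = Ploc_set"
      using sets_eq_imp_space_eq[OF that] by (simp add: P_loc_def space_part_measure)
    moreover have "Rest_Q \<in> measurable \<mu> P_Q"
      using measurable_Rest_Q measurable_cong_sets[OF that, of P_Q P_Q] by simp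
    ultimately show ?thesis using emeasure_distr[of Rest_Q \<mu> P_Q B] B by simp
  qed
  then show "emeasure \<mu>1 A = emeasure \<mu>2 A" using sets1 sets2 distr_eq by simp
qed

section \<open>Existence\<close>

lemma distr_distr_AE_inverse:
  assumes L: "L \<in> measurable M N" and R: "R \<in> measurable N K" and sets: "sets K = sets M"
    and inverse: "AE x in M. R (L x) = x"
  shows "distr (distr M N L) K R = M"
proof -
  have "distr (distr M N L) K R = distr M K (R \<circ> L)" by (rule distr_distr[OF R L])
  also have "\<dots> = distr M K (\<lambda>x. x)"
    using inverse measurable_comp[OF L R] measurable_ident_sets[OF sets[symmetric]]
    by (intro distr_cong_AE) auto
  also have "\<dots> = M" by (rule distr_id2[OF sets])
  finally show ?thesis .
qed

lemma Rplus_in_Ploc: "{Rplus} \<in> Ploc_set"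
proof -
  have segment: "S = Rplus" if "segment Rplus {Rplus} S" for S
    using that unfolding segment_def convex_in_def by blast
  have "partition_on Rplus {Rplus}" by (rule partition_on_space) (auto simp: Rplus_def)
  moreover have "right_cont_R {Rplus}"
    unfolding right_cont_R_def using segment by (auto simp: Rplus_def atLeast_def)
  moreover have "loc_finite_R {Rplus}"
    unfolding loc_finite_R_def using segment by (auto intro: finite_subset[of _ "{Rplus}"])
  ultimately show ?thesis unfolding Ploc_set_def by (simp add: mem_Parts_iff)
qed

text \<open>Off \<open>G\<close> the trivial partition \<open>{Rplus}\<close> serves as an arbitrary element of \<open>Ploc_set\<close>.\<close>

definition lift_on :: "rat set set set \<Rightarrow> rat set set \<Rightarrow> real set set" where
  "lift_on G P = (if P \<in> G then lift P else {Rplus})"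

lemma measurable_lift_on:
  assumes sets: "sets M = sets P_Q" and G: "G \<in> sets M" and good: "\<And>P. P \<in> G \<Longrightarrow> good_partition P"
  shows "lift_on G \<in> measurable M P_loc"
  unfolding P_loc_def
proof (rule measurable_part_measureI[OF _ Ploc_set_subset])
  show "lift_on G \<in> space M \<rightarrow> Ploc_set" unfolding lift_on_def
    using lift_in_Ploc good Rplus_in_Ploc by auto
  fix x y assume xy: "x \<in> Rplus" "y \<in> Rplus"
  have "same_block (lift_on G P) x y \<longleftrightarrow> (P \<in> G \<longrightarrow> same_germ P x y)" for P
  proof (cases "P \<in> G")
    case True
    then show ?thesis
      using same_block_iff_same_germ[OF partition_on_lift right_locally_constant_lift xy] good
      by (simp add: lift_on_def Rest_Q_lift)
  qed (use xy in \<open>simp add: lift_on_def same_block_def\<close>)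
  moreover have "Measurable.pred M (\<lambda>P. P \<in> G \<longrightarrow> same_germ P x y)"
  proof (intro pred_intros_logic)
    have "{P \<in> space M. P \<in> G} = G" using sets.sets_into_space[OF G] by blast
    then show "Measurable.pred M (\<lambda>P. P \<in> G)" using G by (simp add: pred_def)
    show "Measurable.pred M (\<lambda>P. same_germ P x y)"
      using pred_same_germ[of x y] sets sets_eq_imp_space_eq[OF sets] by (simp add: pred_def)
  qed
  ultimately show "Measurable.pred M (\<lambda>P. same_block (lift_on G P) x y)" by simp
qed

lemma exists_measurable_lift:
  assumes sets: "sets M = sets P_Q" and good: "AE P in M. good_partition P"
  obtains L where "L \<in> measurable M P_loc" "AE P in M. Rest_Q (L P) = P"
proof -
  obtain N where N: "{P \<in> space M. \<not> good_partition P} \<subseteq> N" "N \<in> sets M" "emeasure M N = 0"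
    using good by (rule AE_E)
  let ?G = "space M - N"
  have "lift_on ?G \<in> measurable M P_loc"
    using N by (intro measurable_lift_on[OF sets]) auto
  moreover have "AE P in M. Rest_Q (lift_on ?G P) = P"
  proof (rule AE_I'[of N])
    show "N \<in> null_sets M" using N by (auto intro: null_setsI)
    show "{P \<in> space M. Rest_Q (lift_on ?G P) \<noteq> P} \<subseteq> N"
      using Rest_Q_lift N(1) unfolding lift_on_def by auto
  qed
  ultimately show thesis by (rule that)
qed

theorem lemma3:
  fixes \<rho> :: real and mubar :: "rat set set measure"
  assumes "\<rho> > 0"
    and "prob_space mubar"
    and "sets mubar = sets P_Q"
    and "AE P in mubar. right_cont_Q P"
    and "\<And>z. finite z \<Longrightarrow> z \<subseteq> Qplus \<Longrightarrow>
           distr mubar (count_space (Parts z)) (Rest z) = mu_rz \<rho> z"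
  shows "\<exists>!\<mu>. sets \<mu> = sets P_loc \<and> distr \<mu> P_Q Rest_Q = mubar"
proof -
  interpret separation_rate mubar \<rho>
    using assms(1,3,5) by unfold_locales (auto intro!: emeasure_separated_le)
  have "AE P in mubar. good_partition P"
    using AE_space assms(4) AE_bounded_changes
    by eventually_elim
      (auto simp: good_partition_def space_eq mem_Parts_iff rat_right_cont_if_right_cont_Q)
  then obtain L where L: "L \<in> measurable mubar P_loc" "AE P in mubar. Rest_Q (L P) = P"
    using exists_measurable_lift[OF sets_eq] by blast
  let ?\<mu> = "distr mubar P_loc L"
  have "distr ?\<mu> P_Q Rest_Q = mubar"
    using distr_distr_AE_inverse[OF L(1) measurable_Rest_Q sets_eq[symmetric] L(2)] .
  then show ?thesis
    using P_loc_measure_eqI by (intro ex1I[of _ ?\<mu>]) auto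
qed

end
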